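(* For $n\ge2$ and $u_1,\dots,u_n\in\mathcal B$, the free cumulant satisfies $R_n[X(u_1),\dots,X(u_n)]=\sum_{\pi\in\widetilde{\mathrm{NC}}_{ns}(n)}\langle W_C(\pi)\Omega,\Omega\rangle_{\gamma,\phi}$, and for $n=1$ the free cumulant $R_1[X(u_1)]$ is zero.
   Context: Let $\mathcal B$ be a unital $*$-algebra with star-linear maps $\phi:\mathcal B\to\mathbb C$, $\gamma:\mathcal B\to\mathcal B$, $\Lambda:\mathcal B\otimes_{alg}\mathcal B\to\mathcal B$, where $\phi$ is positive and faithful and $\gamma+\phi$ is completely positive, with $(\gamma+\phi)[b]:=\gamma[b]+\phi[b]1_{\mathcal B}$. Assume $\phi[v^*\Lambda(b\otimes u)]=\phi[\Lambda(b^*\otimes v)^*u]$ and $\gamma[v^*\Lambda(b\otimes u)]=\gamma[\Lambda(b^*\otimes v)^*u]$ for all $b,u,v$. On $\mathcal F_{alg}(\mathcal B)=\mathbb C\Omega\oplus\bigoplus_{n\ge1}\mathcal B^{\otimes n}$ use the form $\langle\Omega,\Omega\rangle_{\gamma,\phi}=1$, $\langle u_1\otimes\cdots\otimes u_n,v_1\otimes\cdots\otimes v_k\rangle_{\gamma,\phi}=\delta_{n=k}\phi[v_n^*(\gamma+\phi)[v_{n-1}^*\cdots(\gamma+\phi)[v_1^*u_1]\cdots u_{n-1}]u_n]$. For $b\in\mathcal B$: $a^+(b)\Omega=b$, $a^+(b)(u_1\otimes\cdots\otimes u_n)=b\otimes u_1\otimes\cdots\otimes u_n$; $a^-(b)\Omega=0$,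 $a^-(b)u_1=\phi[bu_1]\Omega$, $a^-(b)(u_1\otimes\cdots\otimes u_n)=(\gamma+\phi)[bu_1]u_2\otimes\cdots\otimes u_n$ ($n\ge2$); $a^0(b)\Omega=0$, $a^0(b)(u_1\otimes\cdots\otimes u_n)=\Lambda(b\otimes u_1)\otimes u_2\otimes\cdots\otimes u_n$; $X(b)=a^+(b)+a^-(b)+a^0(b)$. Further define $a^\sim_\gamma(b)$ by $a^\sim_\gamma(b)(u_1\otimes\cdots\otimes u_n)=\gamma[bu_1]u_2\otimes\cdots\otimes u_n$ for $n\ge2$, $a^\sim_\gamma(b)u_1=0$, $a^\sim_\gamma(b)\Omega=0$; and $a^\sim_\phi(b)$ by $a^\sim_\phi(b)(u_1\otimes\cdots\otimes u_n)=\phi[bu_1]u_2\otimes\cdots\otimes u_n$ for $n\ge2$, $a^\sim_\phi(b)u_1=\phi[bu_1]\Omega$, $a^\sim_\phi(b)\Omega=0$. Free cumulants $R_k$ with respect to $\psi(A)=\langle A\Omega,\Omega\rangle_{\gamma,\phi}$ are the multilinear functionals defined by $\psi[Y_1\cdots Y_n]=\sum_{\pi\in\mathrm{NC}(n)}\prod_{V\in\pi}R_{|V|}[Y_{V(1)},\dots,Y_{V(|V|)}]$ ($\mathrm{NC}(n)$: noncrossing partitions of $\{1,\dots,n\}$). $\widetilde{\mathrm{NC}}_{ns}(n)$: noncrossing partitions with no singletons in which $1$ and $n$ are in the same block. In a block the smallest element is opening, the largest closing, the others middle. For $\pi\in\widetilde{\mathrm{NC}}_{ns}(n)$, $W_C(\pi)=a_1(u_1)\cdots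 a_n(u_n)$, where $a_i=a^+$ if $i$ is closing, $a_i=a^\sim_\phi$ if $i=1$, $a_i=a^\sim_\gamma$ if $i\ne1$ is opening, $a_i=a^0$ if $i$ is middle. *)

theory Defs
  imports Complex_Main "HOL-Library.Disjoint_Sets"
begin

definition unital_star_algebra :: "(complex \<Rightarrow> 'b::ring_1 \<Rightarrow> 'b) \<Rightarrow> ('b \<Rightarrow> 'b) \<Rightarrow> bool" where
  "unital_star_algebra sc st \<longleftrightarrow>
     vector_space sc \<and>
     (\<forall>c x y. sc c (x * y) = sc c x * y \<and> sc c (x * y) = x * sc c y) \<and>
     (\<forall>x. st (st x) = x) \<and>
     (\<forall>x y. st (x + y) = st x + st y) \<and>
     (\<forall>c x. st (sc c x) = sc (cnj c) (st x)) \<and>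
     (\<forall>x y. st (x * y) = st y * st x)"

text \<open>(gamma + phi)[b] = gamma[b] + phi[b] 1\<close>
definition gpp :: "(complex \<Rightarrow> 'b::ring_1 \<Rightarrow> 'b) \<Rightarrow> ('b \<Rightarrow> complex) \<Rightarrow> ('b \<Rightarrow> 'b) \<Rightarrow> 'b \<Rightarrow> 'b" where
  "gpp sc \<phi> \<gamma> b = \<gamma> b + sc (\<phi> b) 1"

text \<open>Positive elements of M_n(B): the matrix (M i j) (i,j < n) is a finite sum of A^* A.\<close>
definition pos_matrix :: "('b::ring_1 \<Rightarrow> 'b) \<Rightarrow> nat \<Rightarrow> (nat \<Rightarrow> nat \<Rightarrow> 'b) \<Rightarrow> bool" where
  "pos_matrix st n M \<longleftrightarrow>
     (\<exists>(m::nat) (A :: nat \<Rightarrow> nat \<Rightarrow> nat \<Rightarrow> 'b).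
        \<forall>i<n. \<forall>j<n. M i j = (\<Sum>k<m. \<Sum>l<n. st (A k l i) * A k l j))"

definition completely_positive :: "('b::ring_1 \<Rightarrow> 'b) \<Rightarrow> ('b \<Rightarrow> 'b) \<Rightarrow> bool" where
  "completely_positive st T \<longleftrightarrow>
     (\<forall>n (b :: nat \<Rightarrow> 'b). pos_matrix st n (\<lambda>i j. T (st (b i) * b j)))"

text \<open>Vectors of F_alg(B) are represented by formal finite linear combinations of
words; the empty word is the vacuum Omega, a word [u1,...,un] is u1 \<otimes> ... \<otimes> un.
Operators act on vectors; they are defined on words and extended linearly.\<close>

type_synonym 'b fvec = "(complex \<times> 'b list) list"

definition vac :: "'b fvec" where "vac = [(1, [])]"

definition lift :: "('b list \<Rightarrow> 'b fvec) \<Rightarrow> 'b fvec \<Rightarrow> 'b fvec" where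
  "lift f v = concat (map (\<lambda>(c, w). map (\<lambda>(d, w'). (c * d, w')) (f w)) v)"

fun tacc :: "(complex \<Rightarrow> 'b::ring_1 \<Rightarrow> 'b) \<Rightarrow> ('b \<Rightarrow> 'b) \<Rightarrow> ('b \<Rightarrow> complex) \<Rightarrow> ('b \<Rightarrow> 'b)
             \<Rightarrow> 'b \<Rightarrow> 'b list \<Rightarrow> 'b list \<Rightarrow> 'b" where
  "tacc sc st \<phi> \<gamma> t (u # us) (v # vs) = tacc sc st \<phi> \<gamma> (st v * gpp sc \<phi> \<gamma> t * u) us vs"
| "tacc sc st \<phi> \<gamma> t _ _ = t"

text \<open>The form on words:
 <u1..un, v1..vk> = delta_{n=k} phi[v_n^* (gamma+phi)[v_{n-1}^* ... (gamma+phi)[v_1^* u_1] ... u_{n-1}] u_n],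
 <Omega,Omega> = 1.\<close>
fun form_word :: "(complex \<Rightarrow> 'b::ring_1 \<Rightarrow> 'b) \<Rightarrow> ('b \<Rightarrow> 'b) \<Rightarrow> ('b \<Rightarrow> complex) \<Rightarrow> ('b \<Rightarrow> 'b)
                  \<Rightarrow> 'b list \<Rightarrow> 'b list \<Rightarrow> complex" where
  "form_word sc st \<phi> \<gamma> [] [] = 1"
| "form_word sc st \<phi> \<gamma> (u # us) (v # vs) =
     (if length us = length vs then \<phi> (tacc sc st \<phi> \<gamma> (st v * u) us vs) else 0)"
| "form_word sc st \<phi> \<gamma> _ _ = 0"

definition form :: "(complex \<Rightarrow> 'b::ring_1 \<Rightarrow> 'b) \<Rightarrow> ('b \<Rightarrow> 'b) \<Rightarrow> ('b \<Rightarrow> complex) \<Rightarrow> ('b \<Rightarrow> 'b)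
                  \<Rightarrow> 'b fvec \<Rightarrow> 'b fvec \<Rightarrow> complex" where
  "form sc st \<phi> \<gamma> x y =
     (\<Sum>(c, w)\<leftarrow>x. \<Sum>(d, w')\<leftarrow>y. c * cnj d * form_word sc st \<phi> \<gamma> w w')"

definition vstate :: "(complex \<Rightarrow> 'b::ring_1 \<Rightarrow> 'b) \<Rightarrow> ('b \<Rightarrow> 'b) \<Rightarrow> ('b \<Rightarrow> complex) \<Rightarrow> ('b \<Rightarrow> 'b)
                  \<Rightarrow> ('b fvec \<Rightarrow> 'b fvec) \<Rightarrow> complex" where
  "vstate sc st \<phi> \<gamma> A = form sc st \<phi> \<gamma> (A vac) vac"

fun ap_w :: "'b \<Rightarrow> 'b list \<Rightarrow> 'b fvec" where
  "ap_w b w = [(1, b # w)]"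

fun am_w :: "(complex \<Rightarrow> 'b::ring_1 \<Rightarrow> 'b) \<Rightarrow> ('b \<Rightarrow> complex) \<Rightarrow> ('b \<Rightarrow> 'b) \<Rightarrow> 'b \<Rightarrow> 'b list \<Rightarrow> 'b fvec" where
  "am_w sc \<phi> \<gamma> b [] = []"
| "am_w sc \<phi> \<gamma> b [u] = [(\<phi> (b * u), [])]"
| "am_w sc \<phi> \<gamma> b (u1 # u2 # us) = [(1, gpp sc \<phi> \<gamma> (b * u1) * u2 # us)]"

fun a0_w :: "('b \<Rightarrow> 'b \<Rightarrow> 'b) \<Rightarrow> 'b \<Rightarrow> 'b list \<Rightarrow> 'b fvec" where
  "a0_w \<Lambda> b [] = []"
| "a0_w \<Lambda> b (u # us) = [(1, \<Lambda> b u # us)]"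

fun atg_w :: "('b::ring_1 \<Rightarrow> 'b) \<Rightarrow> 'b \<Rightarrow> 'b list \<Rightarrow> 'b fvec" where
  "atg_w \<gamma> b (u1 # u2 # us) = [(1, \<gamma> (b * u1) * u2 # us)]"
| "atg_w \<gamma> b _ = []"

fun atp_w :: "(complex \<Rightarrow> 'b::ring_1 \<Rightarrow> 'b) \<Rightarrow> ('b \<Rightarrow> complex) \<Rightarrow> 'b \<Rightarrow> 'b list \<Rightarrow> 'b fvec" where
  "atp_w sc \<phi> b [] = []"
| "atp_w sc \<phi> b [u] = [(\<phi> (b * u), [])]"
| "atp_w sc \<phi> b (u1 # u2 # us) = [(1, sc (\<phi> (b * u1)) u2 # us)]"

definition a_plus :: "'b \<Rightarrow> 'b fvec \<Rightarrow> 'b fvec" where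
  "a_plus b = lift (ap_w b)"
definition a_minus :: "(complex \<Rightarrow> 'b::ring_1 \<Rightarrow> 'b) \<Rightarrow> ('b \<Rightarrow> complex) \<Rightarrow> ('b \<Rightarrow> 'b) \<Rightarrow> 'b \<Rightarrow> 'b fvec \<Rightarrow> 'b fvec" where
  "a_minus sc \<phi> \<gamma> b = lift (am_w sc \<phi> \<gamma> b)"
definition a_zero :: "('b \<Rightarrow> 'b \<Rightarrow> 'b) \<Rightarrow> 'b \<Rightarrow> 'b fvec \<Rightarrow> 'b fvec" where
  "a_zero \<Lambda> b = lift (a0_w \<Lambda> b)"
definition a_tilde_gamma :: "('b::ring_1 \<Rightarrow> 'b) \<Rightarrow> 'b \<Rightarrow> 'b fvec \<Rightarrow> 'b fvec" where
  "a_tilde_gamma \<gamma> b = lift (atg_w \<gamma> b)"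
definition a_tilde_phi :: "(complex \<Rightarrow> 'b::ring_1 \<Rightarrow> 'b) \<Rightarrow> ('b \<Rightarrow> complex) \<Rightarrow> 'b \<Rightarrow> 'b fvec \<Rightarrow> 'b fvec" where
  "a_tilde_phi sc \<phi> b = lift (atp_w sc \<phi> b)"

text \<open>X(b) = a^+(b) + a^-(b) + a^0(b) (sum of vectors = concatenation of formal sums)\<close>
definition Xop :: "(complex \<Rightarrow> 'b::ring_1 \<Rightarrow> 'b) \<Rightarrow> ('b \<Rightarrow> complex) \<Rightarrow> ('b \<Rightarrow> 'b) \<Rightarrow> ('b \<Rightarrow> 'b \<Rightarrow> 'b)
                 \<Rightarrow> 'b \<Rightarrow> 'b fvec \<Rightarrow> 'b fvec" where
  "Xop sc \<phi> \<gamma> \<Lambda> b v = a_plus b v @ a_minus sc \<phi> \<gamma> b v @ a_zero \<Lambda> b v"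

text \<open>Product of operators Y1 ... Yn (Yn acts first).\<close>
definition opprod :: "('x \<Rightarrow> 'x) list \<Rightarrow> 'x \<Rightarrow> 'x" where
  "opprod Ys = foldr (\<circ>) Ys id"

section \<open>Noncrossing partitions (of {0..<n}, i.e. {1..n} shifted by one)\<close>

definition noncrossing :: "nat set set \<Rightarrow> bool" where
  "noncrossing \<pi> \<longleftrightarrow>
     (\<forall>V\<in>\<pi>. \<forall>W\<in>\<pi>. V \<noteq> W \<longrightarrow>
        \<not> (\<exists>a b c d. a < b \<and> b < c \<and> c < d \<and> a \<in> V \<and> c \<in> V \<and> b \<in> W \<and> d \<in> W))"

definition NC :: "nat \<Rightarrow> nat set set set" where
  "NC n = {\<pi>. partition_on {0..<n} \<pi> \<and> noncrossing \<pi>}"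

definition NC_tilde_ns :: "nat \<Rightarrow> nat set set set" where
  "NC_tilde_ns n = {\<pi> \<in> NC n. (\<forall>V\<in>\<pi>. card V \<noteq> 1) \<and> (\<exists>V\<in>\<pi>. 0 \<in> V \<and> n - 1 \<in> V)}"

lemma length_nths_less:
  assumes "V \<subset> {0..<length Ys}"
  shows "length (nths Ys V) < length Ys"
proof -
  have "{i. i < length Ys \<and> i \<in> V} = V" using assms by auto
  hence "length (nths Ys V) = card V" by (simp add: length_nths)
  also have "\<dots> < card {0..<length Ys}" using assms by (intro psubset_card_mono) auto
  finally show ?thesis by simp
qed

text \<open>The free cumulants with respect to psi, determined recursively by the
moment--cumulant formula psi[Y1...Yn] = sum over pi in NC(n) of prod over blocks
V of R_|V|[Y_V] (the guard on V is always satisfied for blocks of a partition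
different from the one-block partition).\<close>
function cumulant :: "(('x \<Rightarrow> 'x) \<Rightarrow> complex) \<Rightarrow> ('x \<Rightarrow> 'x) list \<Rightarrow> complex" where
  "cumulant \<psi> Ys =
     \<psi> (opprod Ys) -
     (\<Sum>\<pi> \<in> NC (length Ys) - {{{0..<length Ys}}}.
        \<Prod>V\<in>\<pi>. (if V \<subset> {0..<length Ys} then cumulant \<psi> (nths Ys V) else 0))"
  by pat_completeness auto
termination
  by (relation "measure (\<lambda>(\<psi>, Ys). length Ys)") (auto simp: length_nths_less)

definition is_closing :: "nat set set \<Rightarrow> nat \<Rightarrow> bool" where
  "is_closing \<pi> i \<longleftrightarrow> (\<exists>V\<in>\<pi>. i \<in> V \<and> i = Max V)"
definition is_opening :: "nat set set \<Rightarrow> nat \<Rightarrow> bool" where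
  "is_opening \<pi> i \<longleftrightarrow> (\<exists>V\<in>\<pi>. i \<in> V \<and> i = Min V)"

definition WC :: "(complex \<Rightarrow> 'b::ring_1 \<Rightarrow> 'b) \<Rightarrow> ('b \<Rightarrow> complex) \<Rightarrow> ('b \<Rightarrow> 'b) \<Rightarrow> ('b \<Rightarrow> 'b \<Rightarrow> 'b)
                \<Rightarrow> nat \<Rightarrow> nat set set \<Rightarrow> (nat \<Rightarrow> 'b) \<Rightarrow> 'b fvec \<Rightarrow> 'b fvec" where
  "WC sc \<phi> \<gamma> \<Lambda> n \<pi> u =
     opprod (map (\<lambda>i. if is_closing \<pi> i then a_plus (u i)
                      else if i = 0 then a_tilde_phi sc \<phi> (u i)
                      else if is_opening \<pi> i then a_tilde_gamma \<gamma> (u i)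
                      else a_zero \<Lambda> (u i)) [0..<n])"

end

theory Submission
  imports Defs
begin

text \<open>
  Expanding \<open>X(u\<^sub>1)\<cdots>X(u\<^sub>n)\<Omega>\<close> and splitting \<open>a\<^sup>-\<close> into \<open>a\<^sup>~\<^sub>\<gamma> + a\<^sup>~\<^sub>\<phi>\<close> writes the moment as a
  sum over colorings of the positions by the four roles \<open>a\<^sup>+, a\<^sup>0, a\<^sup>~\<^sub>\<gamma>, a\<^sup>~\<^sub>\<phi>\<close>. Each such
  operator product maps the vacuum to a multiple of a single word, so each coloring has a scalar
  value. Bookkeeping of word lengths shows that a coloring with nonzero value matches a unique
  noncrossing partition without singletons (closings are \<open>a\<^sup>+\<close>, openings are \<open>a\<^sup>~\<close>, middles are
  \<open>a\<^sup>0\<close>); grouping its blocks according to the \<open>\<phi>\<close>-openings yields \<open>\<sigma> \<in> NC(n)\<close> together with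
  some \<open>\<rho>\<^sub>V \<in> NC\<^sup>~\<^sub>n\<^sub>s(V)\<close> for every \<open>V \<in> \<sigma>\<close>, and this correspondence is bijective. Blocks of \<open>\<sigma>\<close>
  that are intervals can be cut out of the operator product, so the value factorizes over \<open>\<sigma>\<close>
  and the moment equals \<open>\<Sum>\<^sub>\<sigma> \<Prod>\<^sub>V K(V)\<close>, where \<open>K(V)\<close> is the sum of \<open>\<langle>W\<^sub>C(\<rho>)\<Omega>,\<Omega>\<rangle>\<close> over
  \<open>\<rho> \<in> NC\<^sup>~\<^sub>n\<^sub>s(V)\<close>. This is the moment-cumulant formula, which determines the cumulants
  recursively; hence the cumulants are given by \<open>K\<close>, which vanishes on singletons.
\<close>

section \<open>Expanding products of the field operators\<close>

lemma opprod_Nil [simp]: "opprod [] = id"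
  by (simp add: opprod_def)

lemma opprod_Cons [simp]: "opprod (f # fs) = f \<circ> opprod fs"
  by (simp add: opprod_def)

lemma lift_Nil [simp]: "lift f [] = []"
  by (simp add: lift_def)

lemma lift_Cons [simp]: "lift f ((a, w) # v) = map (\<lambda>(d, w'). (a * d, w')) (f w) @ lift f v"
  by (simp add: lift_def)

lemma lift_append [simp]: "lift f (v1 @ v2) = lift f v1 @ lift f v2"
  by (simp add: lift_def)

definition lin_ext :: "('b list \<Rightarrow> complex) \<Rightarrow> 'b fvec \<Rightarrow> complex" where
  "lin_ext g v = (\<Sum>(a, w)\<leftarrow>v. a * g w)"

lemma lin_ext_Nil [simp]: "lin_ext g [] = 0"
  and lin_ext_Cons [simp]: "lin_ext g ((a, w) # v) = a * g w + lin_ext g v"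
  and lin_ext_append [simp]: "lin_ext g (v1 @ v2) = lin_ext g v1 + lin_ext g v2"
  by (simp_all add: lin_ext_def)

lemma lin_ext_lift: "lin_ext g (lift f v) = lin_ext (\<lambda>w. lin_ext g (f w)) v"
proof -
  have "lin_ext g (map (\<lambda>(d, w'). (a * d, w')) l) = a * lin_ext g l" for a l
    by (induction l) (auto simp: algebra_simps)
  then show ?thesis
    by (induction v) auto
qed

lemma lin_ext_add_fun: "lin_ext (\<lambda>w. g1 w + g2 w) v = lin_ext g1 v + lin_ext g2 v"
  by (induction v) (auto simp: algebra_simps)

definition vacuum_coeff :: "'b list \<Rightarrow> complex" where
  "vacuum_coeff w = (if w = [] then 1 else 0)"

lemma vstate_eq_lin_ext: "vstate sc st \<phi> \<gamma> A = lin_ext vacuum_coeff (A vac)"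
proof -
  have "form_word sc st \<phi> \<gamma> w [] = vacuum_coeff w" for w
    by (cases w) (auto simp: vacuum_coeff_def)
  then have "form sc st \<phi> \<gamma> x vac = lin_ext vacuum_coeff x" for x
    by (induction x) (auto simp: form_def vac_def)
  then show ?thesis
    by (simp add: vstate_def)
qed

text \<open>The four kinds of factors in the expansion of \<open>X(u\<^sub>1)\<cdots>X(u\<^sub>n)\<close>: \<open>a\<^sup>+\<close>, \<open>a\<^sup>0\<close>, and
  the two summands \<open>a\<^sup>~\<^sub>\<gamma>\<close>, \<open>a\<^sup>~\<^sub>\<phi>\<close> into which \<open>a\<^sup>-\<close> splits.
  An assignment of roles to positions is called a coloring.\<close>

datatype role = Closing | Middle | Opening_gamma | Opening_phi

lemma UNIV_role: "(UNIV :: role set) = {Closing, Middle, Opening_gamma, Opening_phi}"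
  by (auto intro: role.exhaust)

lemma finite_UNIV_role [simp]: "finite (UNIV :: role set)"
  by (simp add: UNIV_role)

lemma sum_UNIV_role:
  "(\<Sum>s\<in>UNIV. f s) = f Closing + f Middle + f Opening_gamma + (f Opening_phi :: 'c::comm_monoid_add)"
  by (simp add: UNIV_role add.assoc)

locale fock_operators = vector_space sc
  for sc :: "complex \<Rightarrow> 'b::ring_1 \<Rightarrow> 'b" +
  fixes \<phi> :: "'b \<Rightarrow> complex" and \<gamma> :: "'b \<Rightarrow> 'b" and \<Lambda> :: "'b \<Rightarrow> 'b \<Rightarrow> 'b"
  assumes scale_mult_left: "sc a (x * y) = sc a x * y"
    and scale_mult_right: "sc a (x * y) = x * sc a y"
    and linear_phi: "Vector_Spaces.linear sc (*) \<phi>"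
    and linear_gamma: "Vector_Spaces.linear sc sc \<gamma>"
    and linear_Lambda: "Vector_Spaces.linear sc sc (\<Lambda> b)"
begin

lemma phi_add: "\<phi> (x + y) = \<phi> x + \<phi> y"
  and phi_scale: "\<phi> (sc a x) = a * \<phi> x"
  and gamma_add: "\<gamma> (x + y) = \<gamma> x + \<gamma> y"
  and gamma_scale: "\<gamma> (sc a x) = sc a (\<gamma> x)"
  and Lambda_add: "\<Lambda> b (x + y) = \<Lambda> b x + \<Lambda> b y"
  and Lambda_scale: "\<Lambda> b (sc a x) = sc a (\<Lambda> b x)"
  using linear_phi linear_gamma linear_Lambda[of b]
  by (auto simp: module_hom_iff_linear[symmetric] module_hom.add module_hom.scale)

fun step :: "role \<Rightarrow> 'b \<Rightarrow> 'b list \<Rightarrow> (complex \<times> 'b list) option" where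
  "step Closing b w = Some (1, b # w)"
| "step Middle b (x # r) = Some (1, \<Lambda> b x # r)"
| "step Opening_gamma b (x # y # r) = Some (1, \<gamma> (b * x) * y # r)"
| "step Opening_phi b [x] = Some (\<phi> (b * x), [])"
| "step Opening_phi b (x # y # r) = Some (1, sc (\<phi> (b * x)) y # r)"
| "step _ _ _ = None"

definition role_op :: "role \<Rightarrow> 'b \<Rightarrow> 'b fvec \<Rightarrow> 'b fvec" where
  "role_op s b = lift (\<lambda>w. case step s b w of None \<Rightarrow> [] | Some p \<Rightarrow> [p])"

lemma role_op_Closing: "role_op Closing b = a_plus b"
  and role_op_Middle: "role_op Middle b = a_zero \<Lambda> b"
  and role_op_Opening_gamma: "role_op Opening_gamma b = a_tilde_gamma \<gamma> b"
  and role_op_Opening_phi: "role_op Opening_phi b = a_tilde_phi sc \<phi> b"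
proof -
  have "(case step s b w of None \<Rightarrow> [] | Some p \<Rightarrow> [p]) =
      (case s of Closing \<Rightarrow> ap_w b w | Middle \<Rightarrow> a0_w \<Lambda> b w
       | Opening_gamma \<Rightarrow> atg_w \<gamma> b w | Opening_phi \<Rightarrow> atp_w sc \<phi> b w)" for s w
    by (cases s; cases w rule: remdups_adj.cases) auto
  then show "role_op Closing b = a_plus b" "role_op Middle b = a_zero \<Lambda> b"
    "role_op Opening_gamma b = a_tilde_gamma \<gamma> b" "role_op Opening_phi b = a_tilde_phi sc \<phi> b"
    by (simp_all add: role_op_def a_plus_def a_zero_def a_tilde_gamma_def a_tilde_phi_def
        ap_w.simps[abs_def])
qed

definition step_fun :: "('b list \<Rightarrow> complex) \<Rightarrow> role \<Rightarrow> 'b \<Rightarrow> 'b list \<Rightarrow> complex" where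
  "step_fun g s b w = (case step s b w of None \<Rightarrow> 0 | Some (a, w') \<Rightarrow> a * g w')"

lemma lin_ext_role_op: "lin_ext g (role_op s b v) = lin_ext (step_fun g s b) v"
proof -
  have "lin_ext g (case step s b w of None \<Rightarrow> [] | Some p \<Rightarrow> [p]) = step_fun g s b w" for w
    by (auto simp: step_fun_def split: option.split)
  then show ?thesis
    by (simp add: role_op_def lin_ext_lift)
qed

text \<open>The splitting of \<open>a\<^sup>-\<close> is only valid after applying a functional that is additive in
  the first letter of a word; multilinearity is the invariant that survives composition with the
  role operators.\<close>

definition multilinear :: "('b list \<Rightarrow> complex) \<Rightarrow> bool" where
  "multilinear g \<longleftrightarrow>
     (\<forall>xs ys x y. g (xs @ (x + y) # ys) = g (xs @ x # ys) + g (xs @ y # ys)) \<and>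
     (\<forall>xs ys a x. g (xs @ sc a x # ys) = a * g (xs @ x # ys))"

lemma multilinear_add_first: "multilinear g \<Longrightarrow> g ((x + y) # w) = g (x # w) + g (y # w)"
  and multilinear_scale_first: "multilinear g \<Longrightarrow> g (sc a x # w) = a * g (x # w)"
  unfolding multilinear_def by (metis append_Nil)+

lemma multilinear_vacuum_coeff: "multilinear vacuum_coeff"
  by (simp add: multilinear_def vacuum_coeff_def)

lemma multilinear_step_fun:
  assumes "multilinear g"
  shows "multilinear (step_fun g s b)"
proof -
  have add: "g (xs @ (x + y) # ys) = g (xs @ x # ys) + g (xs @ y # ys)"
    and scale: "g (xs @ sc a x # ys) = a * g (xs @ x # ys)" for xs ys x y a
    using assms by (simp_all add: multilinear_def)
  \<comment> \<open>\<open>simp\<close> cannot match \<open>xs @ _\<close> against a word with an explicit prefix\<close>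
  note add_cases = add[of "[]"] add[of "[_]"] add[of "[_, _]"]
    add[of "_ # _"] add[of "_ # _ # _"] add[of "_ # _ # _ # _"]
  note scale_cases = scale[of "[]"] scale[of "[_]"] scale[of "[_, _]"]
    scale[of "_ # _"] scale[of "_ # _ # _"] scale[of "_ # _ # _ # _"]
  show ?thesis
    unfolding multilinear_def step_fun_def
    by (cases s; intro conjI allI; case_tac xs rule: remdups_adj.cases; case_tac ys;
        simp add: add_cases[simplified] scale_cases[simplified]
          distrib_left distrib_right phi_add gamma_add Lambda_add phi_scale gamma_scale
          Lambda_scale scale_right_distrib scale_left_distrib
          scale_mult_right[symmetric] scale_mult_left[symmetric] mult.commute)
qed

lemma lin_ext_a_minus:
  assumes "multilinear g"
  shows "lin_ext g (a_minus sc \<phi> \<gamma> b v) =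
    lin_ext g (role_op Opening_gamma b v) + lin_ext g (role_op Opening_phi b v)"
proof -
  have "gpp sc \<phi> \<gamma> z * y = \<gamma> z * y + sc (\<phi> z) y" for z y
    using scale_mult_left[of "\<phi> z" 1 y] by (simp add: gpp_def distrib_right)
  then have "lin_ext g (am_w sc \<phi> \<gamma> b w) = step_fun g Opening_gamma b w + step_fun g Opening_phi b w"
    for w
    using multilinear_add_first[OF assms] multilinear_scale_first[OF assms]
    by (cases w rule: remdups_adj.cases) (auto simp: step_fun_def)
  then show ?thesis
    by (simp add: a_minus_def lin_ext_lift lin_ext_role_op lin_ext_add_fun)
qed

lemma lin_ext_Xop:
  assumes "multilinear g"
  shows "lin_ext g (Xop sc \<phi> \<gamma> \<Lambda> b v) = (\<Sum>s\<in>UNIV. lin_ext g (role_op s b v))"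
  using lin_ext_a_minus[OF assms]
  by (simp add: Xop_def sum_UNIV_role role_op_Closing role_op_Middle ac_simps)

text \<open>Each role operator maps a word to at most one word. As in the operator product, the last
  position acts first.\<close>

fun run :: "(nat \<Rightarrow> 'b) \<Rightarrow> (nat \<Rightarrow> role) \<Rightarrow> nat list \<Rightarrow> 'b list \<Rightarrow> (complex \<times> 'b list) option"
  where
  "run u c [] w = Some (1, w)"
| "run u c (p # ps) w = (case run u c ps w of None \<Rightarrow> None | Some (a, w') \<Rightarrow>
     (case step (c p) (u p) w' of None \<Rightarrow> None | Some (b, w'') \<Rightarrow> Some (a * b, w'')))"

definition role_ops :: "(nat \<Rightarrow> 'b) \<Rightarrow> (nat \<Rightarrow> role) \<Rightarrow> nat list \<Rightarrow> 'b fvec \<Rightarrow> 'b fvec" where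
  "role_ops u c ps = opprod (map (\<lambda>i. role_op (c i) (u i)) ps)"

lemma role_ops_Nil [simp]: "role_ops u c [] = id"
  and role_ops_Cons: "role_ops u c (p # ps) v = role_op (c p) (u p) (role_ops u c ps v)"
  by (simp_all add: role_ops_def)

lemma role_ops_cong: "(\<And>i. i \<in> set ps \<Longrightarrow> c i = c' i) \<Longrightarrow> role_ops u c ps = role_ops u c' ps"
  unfolding role_ops_def by (simp cong: map_cong)

lemma lin_ext_opprod_Xop:
  assumes "distinct ps" and "multilinear g"
  shows "lin_ext g (opprod (map (\<lambda>i. Xop sc \<phi> \<gamma> \<Lambda> (u i)) ps) v) =
    (\<Sum>c\<in>PiE (set ps) (\<lambda>_. UNIV). lin_ext g (role_ops u c ps v))"
  using assms
proof (induction ps arbitrary: g)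
  case Nil
  then show ?case by simp
next
  case (Cons p ps)
  have p: "p \<notin> set ps" and ps: "distinct ps"
    using Cons.prems by auto
  let ?Y = "opprod (map (\<lambda>i. Xop sc \<phi> \<gamma> \<Lambda> (u i)) ps) v"
  have "lin_ext g (opprod (map (\<lambda>i. Xop sc \<phi> \<gamma> \<Lambda> (u i)) (p # ps)) v) =
      (\<Sum>s\<in>UNIV. lin_ext (step_fun g s (u p)) ?Y)"
    by (simp add: lin_ext_Xop[OF Cons.prems(2)] lin_ext_role_op)
  also have "\<dots> = (\<Sum>s\<in>UNIV. \<Sum>c\<in>PiE (set ps) (\<lambda>_. UNIV).
      lin_ext g (role_op s (u p) (role_ops u c ps v)))"
    by (simp add: Cons.IH[OF ps multilinear_step_fun[OF Cons.prems(2)]] lin_ext_role_op)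
  also have "\<dots> = (\<Sum>(s, c)\<in>UNIV \<times> PiE (set ps) (\<lambda>_. UNIV).
      lin_ext g (role_ops u (c(p := s)) (p # ps) v))"
    unfolding sum.cartesian_product
  proof (intro sum.cong refl, clarify)
    fix s and c :: "nat \<Rightarrow> role"
    have "role_ops u (c(p := s)) ps = role_ops u c ps"
      using p by (intro role_ops_cong) auto
    then show "lin_ext g (role_op s (u p) (role_ops u c ps v)) =
        lin_ext g (role_ops u (c(p := s)) (p # ps) v)"
      by (simp add: role_ops_Cons)
  qed
  also have "\<dots> = (\<Sum>c\<in>PiE (set (p # ps)) (\<lambda>_. UNIV). lin_ext g (role_ops u c (p # ps) v))"
  proof -
    have "PiE (set (p # ps)) (\<lambda>_. UNIV :: role set) =
        (\<lambda>(s, c). c(p := s)) ` (UNIV \<times> PiE (set ps) (\<lambda>_. UNIV))"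
      by (simp add: PiE_insert_eq)
    then show ?thesis
      using inj_combinator[OF p, of "\<lambda>_. UNIV :: role set"]
      by (simp add: sum.reindex case_prod_unfold)
  qed
  finally show ?case .
qed

lemma role_ops_singleton:
  "role_ops u c ps [(a, w)] = (case run u c ps w of None \<Rightarrow> [] | Some (b, w') \<Rightarrow> [(a * b, w')])"
  by (induction ps arbitrary: a w)
    (auto simp: role_ops_Cons role_op_def mult.assoc split: option.splits)

definition run_value :: "(nat \<Rightarrow> 'b) \<Rightarrow> (nat \<Rightarrow> role) \<Rightarrow> nat list \<Rightarrow> 'b list \<Rightarrow> complex" where
  "run_value u c ps w = (case run u c ps w of Some (a, []) \<Rightarrow> a | _ \<Rightarrow> 0)"

lemma run_value_eq_lin_ext: "run_value u c ps w = lin_ext vacuum_coeff (role_ops u c ps [(1, w)])"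
  by (auto simp: run_value_def role_ops_singleton vacuum_coeff_def split: option.split list.split)

lemma multilinear_role_ops:
  "multilinear g \<Longrightarrow> multilinear (\<lambda>w. lin_ext g (role_ops u c ps [(1, w)]))"
proof (induction ps arbitrary: g)
  case Nil
  then show ?case by (simp add: multilinear_def)
next
  case (Cons p ps)
  then show ?case
    using Cons.IH[OF multilinear_step_fun[OF Cons.prems]]
    by (simp add: role_ops_Cons lin_ext_role_op)
qed

lemma run_value_scale_first: "run_value u c ps (sc a x # w) = a * run_value u c ps (x # w)"
  using multilinear_scale_first[OF multilinear_role_ops[OF multilinear_vacuum_coeff]]
  by (simp add: run_value_eq_lin_ext)

definition coloring_value :: "(nat \<Rightarrow> 'b) \<Rightarrow> nat set \<Rightarrow> (nat \<Rightarrow> role) \<Rightarrow> complex" where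
  "coloring_value u S c = run_value u c (sorted_list_of_set S) []"

definition moment :: "(nat \<Rightarrow> 'b) \<Rightarrow> nat set \<Rightarrow> complex" where
  "moment u S = lin_ext vacuum_coeff (opprod (map (\<lambda>i. Xop sc \<phi> \<gamma> \<Lambda> (u i)) (sorted_list_of_set S)) vac)"

lemma moment_eq_sum_coloring_value:
  "finite S \<Longrightarrow> moment u S = (\<Sum>c\<in>PiE S (\<lambda>_. UNIV). coloring_value u S c)"
  by (simp add: moment_def vac_def lin_ext_opprod_Xop multilinear_vacuum_coeff coloring_value_def
      run_value_eq_lin_ext)

end

section \<open>Word lengths and admissible colorings\<close>

fun demand :: "role \<Rightarrow> int" where
  "demand Closing = 0" | "demand Middle = 1" | "demand Opening_gamma = 2" | "demand Opening_phi = 1"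

fun shift :: "role \<Rightarrow> int" where
  "shift Closing = 1" | "shift Middle = 0" | "shift Opening_gamma = -1" | "shift Opening_phi = -1"

definition height :: "(nat \<Rightarrow> role) \<Rightarrow> nat set \<Rightarrow> int" where
  "height c T = (\<Sum>x\<in>T. shift (c x))"

lemma height_Diff: "finite A \<Longrightarrow> V \<subseteq> A \<Longrightarrow> height c A = height c (A - V) + height c V"
  by (simp add: height_def sum.subset_diff)

lemma height_Middle: "(\<And>x. x \<in> A \<Longrightarrow> c x = Middle) \<Longrightarrow> height c A = 0"
  by (simp add: height_def)

text \<open>While running over \<open>S\<close> from the vacuum, the word in front of position \<open>p\<close> has length
  \<open>height c {x\<in>S. p < x}\<close>.\<close>

definition admissible :: "(nat \<Rightarrow> role) \<Rightarrow> nat set \<Rightarrow> bool" where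
  "admissible c S \<longleftrightarrow> (\<forall>p\<in>S. demand (c p) \<le> height c {x\<in>S. p < x}) \<and> height c S = 0"

context fock_operators
begin

lemma step_defined_iff: "step s b w \<noteq> None \<longleftrightarrow> demand s \<le> int (length w)"
  by (cases s; cases w rule: remdups_adj.cases) auto

lemma length_step: "step s b w = Some (a, w') \<Longrightarrow> int (length w') = int (length w) + shift s"
  by (cases s; cases w rule: remdups_adj.cases) auto

lemma length_run:
  "distinct ps \<Longrightarrow> run u c ps w = Some (a, w') \<Longrightarrow> int (length w') = int (length w) + height c (set ps)"
proof (induction ps arbitrary: a w')
  case Nil
  then show ?case by (simp add: height_def)
next
  case (Cons p ps)
  obtain a1 w1 b where "run u c ps w = Some (a1, w1)" and "step (c p) (u p) w1 = Some (b, w')"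
    using Cons.prems by (auto split: option.splits)
  then show ?case
    using Cons.IH length_step Cons.prems(1) by (simp add: height_def)
qed

lemma run_defined_iff:
  "sorted_wrt (<) ps \<Longrightarrow> run u c ps w \<noteq> None \<longleftrightarrow>
    (\<forall>p\<in>set ps. demand (c p) \<le> int (length w) + height c {x\<in>set ps. p < x})"
proof (induction ps)
  case Nil
  then show ?case by simp
next
  case (Cons p ps)
  have above_p: "{x\<in>set (p # ps). p < x} = set ps"
    and above_q: "q \<in> set ps \<Longrightarrow> {x\<in>set (p # ps). q < x} = {x\<in>set ps. q < x}" for q
    using Cons.prems by auto
  have ps: "sorted_wrt (<) ps" and "distinct ps"
    using Cons.prems strict_sorted_iff by auto
  show ?case
  proof (cases "run u c ps w")
    case None
    then show ?thesis using Cons.IH[OF ps] above_q by auto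
  next
    case (Some aw)
    then obtain a1 w1 where run: "run u c ps w = Some (a1, w1)"
      by (cases aw) auto
    then have "run u c (p # ps) w \<noteq> None \<longleftrightarrow> step (c p) (u p) w1 \<noteq> None"
      by (auto split: option.splits)
    also have "\<dots> \<longleftrightarrow> demand (c p) \<le> int (length w) + height c (set ps)"
      using step_defined_iff length_run[OF \<open>distinct ps\<close> run] by simp
    finally show ?thesis
      using Cons.IH[OF ps] run above_p above_q by auto
  qed
qed

lemma run_to_vacuum_iff_admissible:
  assumes "finite S"
  shows "(\<exists>\<alpha>. run u c (sorted_list_of_set S) [] = Some (\<alpha>, [])) \<longleftrightarrow> admissible c S"
proof -
  have defined: "run u c (sorted_list_of_set S) [] \<noteq> None \<longleftrightarrow>
      (\<forall>p\<in>S. demand (c p) \<le> height c {x\<in>S. p < x})"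
    using run_defined_iff[of "sorted_list_of_set S" u c "[]"] assms
    by (simp add: strict_sorted_list_of_set)
  have length: "run u c (sorted_list_of_set S) [] = Some (a, w) \<Longrightarrow> int (length w) = height c S"
    for a w
    using length_run[of "sorted_list_of_set S" u c "[]" a w] assms by simp
  show ?thesis
    unfolding admissible_def
  proof
    assume "\<exists>\<alpha>. run u c (sorted_list_of_set S) [] = Some (\<alpha>, [])"
    then show "(\<forall>p\<in>S. demand (c p) \<le> height c {x\<in>S. p < x}) \<and> height c S = 0"
      using defined length by force
  next
    assume "(\<forall>p\<in>S. demand (c p) \<le> height c {x\<in>S. p < x}) \<and> height c S = 0"
    then obtain \<alpha> w where "run u c (sorted_list_of_set S) [] = Some (\<alpha>, w)" and "height c S = 0"
      using defined by fastforce
    then show "\<exists>\<alpha>. run u c (sorted_list_of_set S) [] = Some (\<alpha>, [])"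
      using length by fastforce
  qed
qed

lemma admissible_if_coloring_value_nonzero:
  "finite S \<Longrightarrow> coloring_value u S c \<noteq> 0 \<Longrightarrow> admissible c S"
  using run_to_vacuum_iff_admissible
  by (fastforce simp: coloring_value_def run_value_def split: option.splits list.splits)

end

definition interval_in :: "nat set \<Rightarrow> nat set \<Rightarrow> bool" where
  "interval_in S V \<longleftrightarrow> (\<forall>x\<in>S. Min V \<le> x \<and> x \<le> Max V \<longrightarrow> x \<in> V)"

lemma sorted_list_of_set_Un:
  fixes A B :: "'a::linorder set"
  assumes "finite A" "finite B" "\<forall>a\<in>A. \<forall>b\<in>B. a < b"
  shows "sorted_list_of_set (A \<union> B) = sorted_list_of_set A @ sorted_list_of_set B"
proof (rule sorted_distinct_set_unique)
  show "sorted (sorted_list_of_set A @ sorted_list_of_set B)"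
    using assms by (auto simp: sorted_append less_imp_le)
  show "distinct (sorted_list_of_set A @ sorted_list_of_set B)"
    using assms by fastforce
qed (use assms in auto)

lemma sorted_list_of_set_split_interval:
  assumes "finite S" "V \<subseteq> S" "V \<noteq> {}" "interval_in S V"
  defines "L \<equiv> {x\<in>S. x < Min V}" and "R \<equiv> {x\<in>S. Max V < x}"
  shows "sorted_list_of_set S = sorted_list_of_set L @ sorted_list_of_set V @ sorted_list_of_set R"
    and "sorted_list_of_set (S - V) = sorted_list_of_set L @ sorted_list_of_set R"
proof -
  have "finite V"
    using assms(1,2) by (rule finite_subset[rotated])
  then have V: "finite V" "\<forall>v\<in>V. Min V \<le> v \<and> v \<le> Max V"
    by auto
  have "S = L \<union> (V \<union> R)" and "S - V = L \<union> R"
    using assms(2,4) V(2) by (auto simp: L_def R_def interval_in_def not_le)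
  moreover have "finite L" "finite R"
    using assms(1) by (simp_all add: L_def R_def)
  moreover have "\<forall>a\<in>L. \<forall>b\<in>V \<union> R. a < b" and "\<forall>a\<in>V. \<forall>b\<in>R. a < b" and "\<forall>a\<in>L. \<forall>b\<in>R. a < b"
    using V(2) assms(3) by (force simp: L_def R_def)+
  ultimately show "sorted_list_of_set S = sorted_list_of_set L @ sorted_list_of_set V @ sorted_list_of_set R"
    and "sorted_list_of_set (S - V) = sorted_list_of_set L @ sorted_list_of_set R"
    using V(1) by (simp_all add: sorted_list_of_set_Un)
qed

context fock_operators
begin

lemma run_append:
  "run u c (xs @ ys) w = (case run u c ys w of None \<Rightarrow> None | Some (a, w') \<Rightarrow>
     (case run u c xs w' of None \<Rightarrow> None | Some (b, w'') \<Rightarrow> Some (a * b, w'')))"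
  by (induction xs) (auto split: option.splits simp: mult.assoc)

lemma run_cong: "(\<And>i. i \<in> set ps \<Longrightarrow> c i = c' i) \<Longrightarrow> run u c ps w = run u c' ps w"
  by (induction ps) (simp_all split: option.split)

lemma step_append_scaled:
  "step s b w = Some (\<beta>, w') \<Longrightarrow> step s b (w @ sc \<alpha> x # r) = Some (1, w' @ sc (\<alpha> * \<beta>) x # r)"
  by (cases s; cases w rule: remdups_adj.cases) (auto simp: mult.commute)

text \<open>This is why the value of a coloring factors over blocks that are intervals: a run can be
  performed in front of further letters, its scalar then being absorbed into the next letter.\<close>

lemma run_append_scaled:
  "run u c ps w = Some (\<alpha>, w') \<Longrightarrow> run u c ps (w @ x # r) = Some (1, w' @ sc \<alpha> x # r)"
proof (induction ps arbitrary: \<alpha> w')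
  case Nil
  then show ?case by simp
next
  case (Cons p ps)
  obtain a w1 b where "run u c ps w = Some (a, w1)" "step (c p) (u p) w1 = Some (b, w')" "\<alpha> = a * b"
    using Cons.prems by (auto split: option.splits)
  then show ?case
    using Cons.IH step_append_scaled by simp
qed

lemma run_value_append:
  "run_value u c (xs @ ys) w = (case run u c ys w of None \<Rightarrow> 0 | Some (a, w') \<Rightarrow> a * run_value u c xs w')"
  by (auto simp: run_value_def run_append split: option.splits list.splits)

lemma run_value_append_vacuum_run:
  assumes "run u c vs [] = Some (\<alpha>, [])"
  shows "run_value u c (xs @ vs) w = \<alpha> * run_value u c xs w"
proof (cases w)
  case Nil
  then show ?thesis
    using assms by (simp add: run_value_append)
next
  case (Cons x r)
  then show ?thesis
    using run_append_scaled[OF assms, of x r] run_value_scale_first[of u c xs \<alpha> x r]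
    by (simp add: run_value_append)
qed

lemma coloring_value_remove_interval:
  assumes "finite S" "V \<subseteq> S" "V \<noteq> {}" "interval_in S V"
    and "run u c (sorted_list_of_set V) [] = Some (\<alpha>, [])"
  shows "coloring_value u S c = \<alpha> * coloring_value u (S - V) c"
proof -
  define L R where "L = sorted_list_of_set {x\<in>S. x < Min V}"
    and "R = sorted_list_of_set {x\<in>S. Max V < x}"
  have "coloring_value u S c = run_value u c ((L @ sorted_list_of_set V) @ R) []"
    and "coloring_value u (S - V) c = run_value u c (L @ R) []"
    using sorted_list_of_set_split_interval[OF assms(1-4)]
    by (simp_all add: coloring_value_def L_def R_def)
  moreover have "run_value u c ((L @ sorted_list_of_set V) @ R) [] = \<alpha> * run_value u c (L @ R) []"
    unfolding run_value_append[of _ _ _ R]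
    by (simp add: run_value_append_vacuum_run[OF assms(5)] split: option.split)
  ultimately show ?thesis
    by simp
qed

end

section \<open>Noncrossing partitions of finite sets of positions\<close>

definition NC_on :: "nat set \<Rightarrow> nat set set set" where
  "NC_on S = {\<pi>. partition_on S \<pi> \<and> noncrossing \<pi>}"

definition NC_ns_on :: "nat set \<Rightarrow> nat set set set" where
  "NC_ns_on S = {\<pi> \<in> NC_on S. \<forall>B\<in>\<pi>. card B \<noteq> 1}"

definition NC_tilde_ns_on :: "nat set \<Rightarrow> nat set set set" where
  "NC_tilde_ns_on V = {\<rho> \<in> NC_ns_on V. \<exists>B\<in>\<rho>. Min V \<in> B \<and> Max V \<in> B}"

lemma partition_on_block_exists: "partition_on S \<pi> \<Longrightarrow> x \<in> S \<Longrightarrow> \<exists>B\<in>\<pi>. x \<in> B"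
  by (auto simp: partition_on_def)

lemma partition_on_block_unique:
  "partition_on S \<pi> \<Longrightarrow> B \<in> \<pi> \<Longrightarrow> B' \<in> \<pi> \<Longrightarrow> x \<in> B \<Longrightarrow> x \<in> B' \<Longrightarrow> B = B'"
  by (auto simp: partition_on_def disjoint_def)

lemma partition_on_block_subset: "partition_on S \<pi> \<Longrightarrow> B \<in> \<pi> \<Longrightarrow> B \<subseteq> S"
  by (auto simp: partition_on_def)

lemma partition_on_block_nonempty: "partition_on S \<pi> \<Longrightarrow> B \<in> \<pi> \<Longrightarrow> B \<noteq> {}"
  by (auto simp: partition_on_def)

lemma partition_on_block_finite: "finite S \<Longrightarrow> partition_on S \<pi> \<Longrightarrow> B \<in> \<pi> \<Longrightarrow> finite B"
  by (rule finite_subset[OF partition_on_block_subset])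

lemma partition_on_block_Min_Max:
  assumes "finite S" "partition_on S \<pi>" "B \<in> \<pi>"
  shows "Min B \<in> B" "Max B \<in> B" "Min B \<in> S" "Max B \<in> S" "x \<in> B \<Longrightarrow> Min B \<le> x \<and> x \<le> Max B"
proof -
  have B: "finite B" "B \<noteq> {}" "B \<subseteq> S"
    using partition_on_block_finite[OF assms] partition_on_block_nonempty[OF assms(2,3)]
      partition_on_block_subset[OF assms(2,3)] by auto
  then show "Min B \<in> B" "Max B \<in> B" "Min B \<in> S" "Max B \<in> S"
    by (meson Min_in Max_in subsetD)+
  show "x \<in> B \<Longrightarrow> Min B \<le> x \<and> x \<le> Max B"
    using B(1) by simp
qed

lemma Min_block_eq_Min:
  assumes "finite V" "partition_on V \<rho>" "B \<in> \<rho>" "Min V \<in> B"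
  shows "Min B = Min V"
  using partition_on_block_Min_Max[OF assms(1-3)] partition_on_block_subset[OF assms(2,3)]
    Min_antimono[of B V] assms(1,4) by (metis Min_le antisym finite_subset)

lemma Max_block_eq_Max:
  assumes "finite V" "partition_on V \<rho>" "B \<in> \<rho>" "Max V \<in> B"
  shows "Max B = Max V"
  using partition_on_block_Min_Max[OF assms(1-3)] partition_on_block_subset[OF assms(2,3)]
    Max_mono[of B V] assms(1,4) by (metis Max_ge antisym finite_subset)

lemma is_closing_iff:
  assumes "partition_on S \<pi>" "B \<in> \<pi>" "x \<in> B"
  shows "is_closing \<pi> x \<longleftrightarrow> x = Max B"
  unfolding is_closing_def by (metis assms partition_on_block_unique)

lemma is_opening_iff:
  assumes "partition_on S \<pi>" "B \<in> \<pi>" "x \<in> B"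
  shows "is_opening \<pi> x \<longleftrightarrow> x = Min B"
  unfolding is_opening_def by (metis assms partition_on_block_unique)

lemma is_closing_is_opening_same_block:
  assumes "partition_on S \<pi>" "partition_on S' \<pi>'" "B \<in> \<pi>" "B \<in> \<pi>'" "x \<in> B"
  shows "is_closing \<pi> x \<longleftrightarrow> is_closing \<pi>' x" and "is_opening \<pi> x \<longleftrightarrow> is_opening \<pi>' x"
  using is_closing_iff[OF assms(1,3,5)] is_closing_iff[OF assms(2,4,5)]
    is_opening_iff[OF assms(1,3,5)] is_opening_iff[OF assms(2,4,5)] by simp_all

lemma noncrossingD:
  "noncrossing \<pi> \<Longrightarrow> V \<in> \<pi> \<Longrightarrow> W \<in> \<pi> \<Longrightarrow> V \<noteq> W \<Longrightarrow> a < b \<Longrightarrow> b < c \<Longrightarrow> c < d \<Longrightarrow>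
    a \<in> V \<Longrightarrow> c \<in> V \<Longrightarrow> b \<in> W \<Longrightarrow> d \<in> W \<Longrightarrow> False"
  unfolding noncrossing_def by metis

lemma noncrossing_subset: "noncrossing \<pi> \<Longrightarrow> \<pi>' \<subseteq> \<pi> \<Longrightarrow> noncrossing \<pi>'"
  unfolding noncrossing_def by (meson subsetD)

lemma Min_less_Max_if_card_ne_1:
  assumes "finite B" "B \<noteq> {}" "card B \<noteq> 1"
  shows "Min B < Max B"
proof (rule ccontr)
  assume "\<not> Min B < Max B"
  then have "x = Min B" if "x \<in> B" for x
    using that Min_le[OF assms(1) that] Max_ge[OF assms(1) that] by (simp add: antisym)
  then have "B = {Min B}"
    using assms(1,2) Min_in by blast
  then show False
    using assms(3) by (metis card_1_singleton_iff One_nat_def)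
qed

lemma finite_NC_on: "finite S \<Longrightarrow> finite (NC_on S)"
  using finitely_many_partition_on by (rule finite_subset[rotated]) (auto simp: NC_on_def)

lemma NC_on_obtain_interval_block:
  assumes "finite S" "S \<noteq> {}" "\<pi> \<in> NC_on S"
  obtains V where "V \<in> \<pi>" "interval_in S V"
proof -
  have p: "partition_on S \<pi>" and nc: "noncrossing \<pi>"
    using assms(3) by (auto simp: NC_on_def)
  have "finite \<pi>" "\<pi> \<noteq> {}"
    using finite_elements[OF assms(1) p] p assms(2) by (auto simp: partition_on_def)
  then obtain V where V: "V \<in> \<pi>" "Max V = Min (Max ` \<pi>)"
    by (metis (mono_tags, lifting) Min_in empty_is_image finite_imageI imageE)
  have "x \<in> V" if x: "x \<in> S" "Min V \<le> x" "x \<le> Max V" for x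
  proof (rule ccontr)
    assume "x \<notin> V"
    obtain B where B: "B \<in> \<pi>" "x \<in> B"
      using partition_on_block_exists[OF p x(1)] by blast
    have "B \<noteq> V"
      using B \<open>x \<notin> V\<close> by auto
    have "Max V \<le> Max B"
      using V B(1) \<open>finite \<pi>\<close> by simp
    then have "Max V < Max B"
      using partition_on_block_unique[OF p B(1) V(1)] partition_on_block_Min_Max[OF assms(1) p]
        B V(1) \<open>B \<noteq> V\<close> by (metis order.not_eq_order_implies_strict)
    moreover have "Min V < x" "x < Max V"
      using x \<open>x \<notin> V\<close> partition_on_block_Min_Max[OF assms(1) p V(1)] by (auto simp: le_less)
    ultimately show False
      using noncrossingD[OF nc V(1) B(1) \<open>B \<noteq> V\<close>[symmetric]] B(2)
        partition_on_block_Min_Max[OF assms(1) p] V(1) B(1) by blast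
  qed
  then show ?thesis
    using that[OF V(1)] by (simp add: interval_in_def)
qed

lemma NC_on_remove_block:
  assumes "\<pi> \<in> NC_on S" "V \<in> \<pi>"
  shows "\<pi> - {V} \<in> NC_on (S - V)"
proof -
  have p: "partition_on S \<pi>" and nc: "noncrossing \<pi>"
    using assms(1) by (auto simp: NC_on_def)
  have "disjnt V (\<Union>(\<pi> - {V}))"
    using partition_on_block_unique[OF p assms(2)] by (auto simp: disjnt_def)
  then have "partition_on (S - V) (\<pi> - {V})"
    using partition_on_insert[of V "\<pi> - {V}" S] p insert_Diff[OF assms(2)] by simp
  then show ?thesis
    using noncrossing_subset[OF nc] by (simp add: NC_on_def)
qed

lemma NC_ns_on_remove_block: "\<pi> \<in> NC_ns_on S \<Longrightarrow> V \<in> \<pi> \<Longrightarrow> \<pi> - {V} \<in> NC_ns_on (S - V)"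
  using NC_on_remove_block[of \<pi> S V] by (auto simp: NC_ns_on_def)

lemma interval_in_between:
  assumes "finite V" "interval_in T V" "x \<in> V" "z \<in> V" "x < y" "y < z" "y \<in> T"
  shows "y \<in> V"
proof -
  have "Min V \<le> y" "y \<le> Max V"
    using Min_le[OF assms(1,3)] Max_ge[OF assms(1,4)] assms(5,6) by linarith+
  then show ?thesis
    using assms(2,7) unfolding interval_in_def by blast
qed

lemma NC_on_insert_interval_block:
  assumes "\<pi> \<in> NC_on S" "V \<noteq> {}" "finite V" "V \<inter> S = {}" "interval_in (S \<union> V) V"
  shows "insert V \<pi> \<in> NC_on (S \<union> V)"
proof -
  have p: "partition_on S \<pi>" and nc: "noncrossing \<pi>"
    using assms(1) by (auto simp: NC_on_def)
  have "disjnt V (\<Union>\<pi>)" and "S \<union> V - V = S"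
    using p assms(4) by (auto simp: partition_on_def disjnt_def)
  then have "partition_on (S \<union> V) (insert V \<pi>)"
    using partition_on_insert[of V \<pi> "S \<union> V"] p assms(2) by simp
  have between: "y \<notin> S" if "x \<in> V" "z \<in> V" "x < y" "y < z" for x y z
    using interval_in_between[OF assms(3,5) that] assms(4) by blast
  have "noncrossing (insert V \<pi>)"
    unfolding noncrossing_def
  proof (intro ballI impI notI)
    fix A B assume AB: "A \<in> insert V \<pi>" "B \<in> insert V \<pi>" "A \<noteq> B"
      and "\<exists>a b c d. a < b \<and> b < c \<and> c < d \<and> a \<in> A \<and> c \<in> A \<and> b \<in> B \<and> d \<in> B"
    then obtain a b c d where abcd: "a < b" "b < c" "c < d" "a \<in> A" "c \<in> A" "b \<in> B" "d \<in> B"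
      by blast
    consider "A = V" "B \<in> \<pi>" | "B = V" "A \<in> \<pi>" | "A \<in> \<pi>" "B \<in> \<pi>"
      using AB by auto
    then show False
    proof cases
      case 1
      then have "b \<in> S"
        using partition_on_block_subset[OF p] abcd(6) by blast
      then show False
        using between[of a c b] abcd(1,2,4,5) 1(1) by simp
    next
      case 2
      then have "c \<in> S"
        using partition_on_block_subset[OF p] abcd(5) by blast
      then show False
        using between[of b d c] abcd(2,3,6,7) 2(1) by simp
    next
      case 3
      show False
        by (rule noncrossingD[OF nc 3 AB(3) abcd])
    qed
  qed
  with \<open>partition_on (S \<union> V) (insert V \<pi>)\<close> show ?thesis
    by (simp add: NC_on_def)
qed

lemma NC_on_image_strict_mono:
  assumes "strict_mono_on A h" "\<pi> \<in> NC_on A"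
  shows "(`) h ` \<pi> \<in> NC_on (h ` A)"
proof -
  have p: "partition_on A \<pi>" and nc: "noncrossing \<pi>"
    using assms(2) by (auto simp: NC_on_def)
  have "(`) h ` \<pi> - {{}} = (`) h ` \<pi>"
    using partition_on_block_nonempty[OF p] by auto
  then have "partition_on (h ` A) ((`) h ` \<pi>)"
    using partition_on_inj_image[OF p strict_mono_on_imp_inj_on[OF assms(1)]] by simp
  moreover have "noncrossing ((`) h ` \<pi>)"
    unfolding noncrossing_def
  proof (intro ballI impI notI)
    fix V' W' assume V': "V' \<in> (`) h ` \<pi>" and W': "W' \<in> (`) h ` \<pi>" and "V' \<noteq> W'"
      and "\<exists>a b c d. a < b \<and> b < c \<and> c < d \<and> a \<in> V' \<and> c \<in> V' \<and> b \<in> W' \<and> d \<in> W'"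
    then obtain a' b' c' d' where "a' < b'" "b' < c'" "c' < d'" "a' \<in> V'" "c' \<in> V'" "b' \<in> W'" "d' \<in> W'"
      by blast
    moreover obtain V W where VW: "V \<in> \<pi>" "V' = h ` V" "W \<in> \<pi>" "W' = h ` W"
      using V' W' by blast
    ultimately obtain a b c d where abcd: "a \<in> V" "b \<in> W" "c \<in> V" "d \<in> W" "h a < h b" "h b < h c" "h c < h d"
      by blast
    have "V \<noteq> W"
      using \<open>V' \<noteq> W'\<close> VW by blast
    have "a \<in> A" "b \<in> A" "c \<in> A" "d \<in> A"
      using partition_on_block_subset[OF p] VW(1,3) abcd(1-4) by blast+
    then have "a < b" "b < c" "c < d"
      using strict_mono_on_less[OF assms(1)] abcd(5-7) by blast+
    then show False
      using noncrossingD[OF nc VW(1,3) \<open>V \<noteq> W\<close>] abcd(1-4) by blast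
  qed
  ultimately show ?thesis
    by (simp add: NC_on_def)
qed

lemma bij_betw_NC_on_image:
  assumes "strict_mono_on A f" "bij_betw f A B"
  shows "bij_betw ((`) ((`) f)) (NC_on A) (NC_on B)"
proof -
  define g where "g = the_inv_into A f"
  have g: "bij_betw g B A"
    unfolding g_def by (rule bij_betw_the_inv_into[OF assms(2)])
  have gf: "x \<in> A \<Longrightarrow> g (f x) = x" and fg: "y \<in> B \<Longrightarrow> f (g y) = y" for x y
    using the_inv_into_f_f[OF bij_betw_imp_inj_on[OF assms(2)]] f_the_inv_into_f_bij_betw[OF assms(2)]
    by (simp_all add: g_def)
  have "strict_mono_on B g"
  proof (rule strict_mono_onI)
    fix x y assume "x \<in> B" "y \<in> B" "x < y"
    then show "g x < g y"
      using strict_mono_on_less[OF assms(1)] bij_betwE[OF g] fg by metis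
  qed
  have inverse: "(`) h' ` (`) h ` \<pi> = \<pi>" if "\<pi> \<in> NC_on C" "\<And>x. x \<in> C \<Longrightarrow> h' (h x) = x"
    for \<pi> C and h h' :: "nat \<Rightarrow> nat"
  proof -
    have "h' ` h ` V = V" if "V \<in> \<pi>" for V
      using partition_on_block_subset[of C \<pi> V] \<open>\<pi> \<in> NC_on C\<close> that \<open>\<And>x. x \<in> C \<Longrightarrow> h' (h x) = x\<close>
      by (force simp: NC_on_def image_image)
    then show ?thesis
      by (simp add: image_image)
  qed
  show ?thesis
  proof (rule bij_betw_byWitness[where f' = "(`) ((`) g)"])
    show "\<forall>\<pi>\<in>NC_on A. (`) g ` (`) f ` \<pi> = \<pi>" "\<forall>\<sigma>\<in>NC_on B. (`) f ` (`) g ` \<sigma> = \<sigma>"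
      using inverse gf fg by blast+
    show "(`) ((`) f) ` NC_on A \<subseteq> NC_on B" "(`) ((`) g) ` NC_on B \<subseteq> NC_on A"
      using NC_on_image_strict_mono[OF assms(1)] NC_on_image_strict_mono[OF \<open>strict_mono_on B g\<close>]
        bij_betw_imp_surj_on[OF assms(2)] bij_betw_imp_surj_on[OF g] by auto
  qed
qed

lemma NC_block_psubset:
  assumes "\<pi> \<in> NC k" "\<pi> \<noteq> {{0..<k}}" "W \<in> \<pi>"
  shows "W \<subset> {0..<k}"
proof -
  have p: "partition_on {0..<k} \<pi>"
    using assms(1) by (simp add: NC_def)
  have "\<pi> = {W}" if "W = {0..<k}"
    using partition_on_block_unique[OF p _ assms(3)] partition_on_block_nonempty[OF p]
      partition_on_block_subset[OF p] that assms(3) by blast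
  then show ?thesis
    using partition_on_block_subset[OF p assms(3)] assms(2) by blast
qed

lemma NC_tilde_ns_on_empty: "NC_tilde_ns_on {} = {}"
  by (auto simp: NC_tilde_ns_on_def NC_ns_on_def NC_on_def partition_on_empty)

lemma NC_tilde_ns_on_singleton: "NC_tilde_ns_on {x} = {}"
proof -
  have False if "\<rho> \<in> NC_tilde_ns_on {x}" for \<rho>
  proof -
    have p: "partition_on {x} \<rho>" and "\<forall>B\<in>\<rho>. card B \<noteq> 1"
      using that by (auto simp: NC_tilde_ns_on_def NC_ns_on_def NC_on_def)
    moreover obtain B where "B \<in> \<rho>" "x \<in> B"
      using partition_on_block_exists[OF p] by blast
    moreover have "B = {x}"
      using partition_on_block_subset[OF p \<open>B \<in> \<rho>\<close>] \<open>x \<in> B\<close> by blast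
    ultimately show False
      by fastforce
  qed
  then show ?thesis
    by blast
qed

section \<open>Colorings compatible with a noncrossing partition\<close>

definition opening_role :: "role \<Rightarrow> bool" where
  "opening_role s \<longleftrightarrow> s = Opening_gamma \<or> s = Opening_phi"

definition compatible :: "nat set set \<Rightarrow> (nat \<Rightarrow> role) \<Rightarrow> nat set \<Rightarrow> bool" where
  "compatible \<pi> c S \<longleftrightarrow> (\<forall>i\<in>S. (c i = Closing \<longleftrightarrow> is_closing \<pi> i) \<and>
     (c i = Middle \<longleftrightarrow> \<not> is_closing \<pi> i \<and> \<not> is_opening \<pi> i))"

lemma NC_ns_on_Min_less_Max:
  "finite S \<Longrightarrow> \<pi> \<in> NC_ns_on S \<Longrightarrow> B \<in> \<pi> \<Longrightarrow> Min B < Max B"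
  by (auto simp: NC_ns_on_def NC_on_def intro!: Min_less_Max_if_card_ne_1
      dest: partition_on_block_finite partition_on_block_nonempty)

lemma compatible_role_in_block:
  assumes "finite S" "\<pi> \<in> NC_ns_on S" "compatible \<pi> c S" "B \<in> \<pi>" "x \<in> B"
  shows "c x = Closing \<longleftrightarrow> x = Max B"
    and "opening_role (c x) \<longleftrightarrow> x = Min B"
    and "c x = Middle \<longleftrightarrow> x \<noteq> Min B \<and> x \<noteq> Max B"
proof -
  have p: "partition_on S \<pi>"
    using assms(2) by (simp add: NC_ns_on_def NC_on_def)
  have "Min B < Max B"
    using NC_ns_on_Min_less_Max[OF assms(1,2,4)] .
  moreover have "c x = Closing \<longleftrightarrow> x = Max B" "c x = Middle \<longleftrightarrow> x \<noteq> Max B \<and> x \<noteq> Min B"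
    using assms(3) partition_on_block_subset[OF p assms(4)] assms(5)
      is_closing_iff[OF p assms(4,5)] is_opening_iff[OF p assms(4,5)]
    by (auto simp: compatible_def)
  ultimately show "c x = Closing \<longleftrightarrow> x = Max B" "opening_role (c x) \<longleftrightarrow> x = Min B"
    "c x = Middle \<longleftrightarrow> x \<noteq> Min B \<and> x \<noteq> Max B"
    by (cases "c x"; auto simp: opening_role_def)+
qed

lemma height_eq_card_diff:
  assumes "finite T"
  shows "height c T = int (card {x\<in>T. c x = Closing}) - int (card {x\<in>T. opening_role (c x)})"
proof -
  have "shift s = of_bool (s = Closing) - of_bool (opening_role s)" for s
    by (cases s) (auto simp: opening_role_def)
  then have "height c T = (\<Sum>x\<in>T. of_bool (c x = Closing)) - (\<Sum>x\<in>T. of_bool (opening_role (c x)))"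
    by (simp add: height_def sum_subtractf)
  then show ?thesis
    using assms by (simp add: sum.inter_filter[symmetric] Int_def)
qed

lemma compatible_closing_positions:
  assumes "finite S" "\<pi> \<in> NC_ns_on S" "compatible \<pi> c S"
  shows "{x\<in>S. c x = Closing} = Max ` \<pi>"
proof -
  have p: "partition_on S \<pi>"
    using assms(2) by (simp add: NC_ns_on_def NC_on_def)
  note role = compatible_role_in_block[OF assms] and block = partition_on_block_Min_Max[OF assms(1) p]
  show ?thesis
  proof (intro equalityI subsetI)
    fix x assume x: "x \<in> {x\<in>S. c x = Closing}"
    then obtain B where "B \<in> \<pi>" "x \<in> B"
      using partition_on_block_exists[OF p] by blast
    then show "x \<in> Max ` \<pi>"
      using role(1) x by blast
  next
    fix x assume "x \<in> Max ` \<pi>"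
    then obtain B where "B \<in> \<pi>" "x = Max B"
      by blast
    then show "x \<in> {x\<in>S. c x = Closing}"
      using role(1)[OF \<open>B \<in> \<pi>\<close> block(2)] block(4) by simp
  qed
qed

lemma compatible_opening_positions:
  assumes "finite S" "\<pi> \<in> NC_ns_on S" "compatible \<pi> c S"
  shows "{x\<in>S. opening_role (c x)} = Min ` \<pi>"
proof -
  have p: "partition_on S \<pi>"
    using assms(2) by (simp add: NC_ns_on_def NC_on_def)
  note role = compatible_role_in_block[OF assms] and block = partition_on_block_Min_Max[OF assms(1) p]
  show ?thesis
  proof (intro equalityI subsetI)
    fix x assume x: "x \<in> {x\<in>S. opening_role (c x)}"
    then obtain B where "B \<in> \<pi>" "x \<in> B"
      using partition_on_block_exists[OF p] by blast
    then show "x \<in> Min ` \<pi>"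
      using role(2) x by blast
  next
    fix x assume "x \<in> Min ` \<pi>"
    then obtain B where "B \<in> \<pi>" "x = Min B"
      by blast
    then show "x \<in> {x\<in>S. opening_role (c x)}"
      using role(2)[OF \<open>B \<in> \<pi>\<close> block(1)] block(3) by simp
  qed
qed

lemma height_compatible:
  assumes "finite S" "\<pi> \<in> NC_ns_on S" "compatible \<pi> c S"
  shows "height c {x\<in>S. P x} = int (card {B\<in>\<pi>. P (Max B)}) - int (card {B\<in>\<pi>. P (Min B)})"
proof -
  have p: "partition_on S \<pi>"
    using assms(2) by (simp add: NC_ns_on_def NC_on_def)
  note block = partition_on_block_Min_Max[OF assms(1) p]
  have "{x\<in>{x\<in>S. P x}. c x = Closing} = {x\<in>{x\<in>S. c x = Closing}. P x}"
    and "{x\<in>{x\<in>S. P x}. opening_role (c x)} = {x\<in>{x\<in>S. opening_role (c x)}. P x}"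
    by auto
  then have "{x\<in>{x\<in>S. P x}. c x = Closing} = Max ` {B\<in>\<pi>. P (Max B)}"
    and "{x\<in>{x\<in>S. P x}. opening_role (c x)} = Min ` {B\<in>\<pi>. P (Min B)}"
    by (simp_all add: compatible_closing_positions[OF assms] compatible_opening_positions[OF assms]
        Compr_image_eq)
  moreover
  have "A = B" if "A \<in> \<pi>" "B \<in> \<pi>" "Max A = Max B \<or> Min A = Min B" for A B
    using that(3) partition_on_block_unique[OF p that(1,2)] block(1,2)[OF that(1)]
      block(1,2)[OF that(2)] by metis
  then have "inj_on Max \<pi>" "inj_on Min \<pi>"
    by (auto intro: inj_onI)
  ultimately show ?thesis
    using height_eq_card_diff[of "{x\<in>S. P x}" c] assms(1)
    by (simp add: card_image inj_on_subset)
qed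

lemma height_above_compatible:
  assumes "finite S" "\<pi> \<in> NC_ns_on S" "compatible \<pi> c S"
  shows "height c {x\<in>S. p < x} = int (card {B\<in>\<pi>. Min B \<le> p \<and> p < Max B})"
proof -
  have p: "partition_on S \<pi>"
    using assms(2) by (simp add: NC_ns_on_def NC_on_def)
  have fin: "finite {B\<in>\<pi>. p < Max B}"
    using finite_elements[OF assms(1) p] by simp
  have sub: "{B\<in>\<pi>. p < Min B} \<subseteq> {B\<in>\<pi>. p < Max B}"
    using NC_ns_on_Min_less_Max[OF assms(1,2)] by force
  have "{B\<in>\<pi>. Min B \<le> p \<and> p < Max B} = {B\<in>\<pi>. p < Max B} - {B\<in>\<pi>. p < Min B}"
    by auto
  then show ?thesis
    using height_compatible[OF assms, of "\<lambda>x. p < x"] card_Diff_subset[OF _ sub] card_mono[OF fin sub]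
      finite_subset[OF sub fin] fin by simp
qed

lemma height_compatible_eq_0:
  "finite S \<Longrightarrow> \<pi> \<in> NC_ns_on S \<Longrightarrow> compatible \<pi> c S \<Longrightarrow> height c S = 0"
  using height_compatible[of S \<pi> c "\<lambda>_. True"] by simp

definition first_closing :: "(nat \<Rightarrow> role) \<Rightarrow> nat set \<Rightarrow> nat" where
  "first_closing c S = Min {x\<in>S. c x = Closing}"

definition first_block :: "(nat \<Rightarrow> role) \<Rightarrow> nat set \<Rightarrow> nat set" where
  "first_block c S = {x\<in>S. Max {y\<in>S. y < first_closing c S \<and> opening_role (c y)} \<le> x \<and>
     x \<le> first_closing c S}"

lemma compatible_first_closed_block_interval:
  assumes "finite S" "\<pi> \<in> NC_ns_on S" "compatible \<pi> c S" "W \<in> \<pi>"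
    and first: "\<And>x. x \<in> S \<Longrightarrow> c x = Closing \<Longrightarrow> Max W \<le> x"
    and x: "x \<in> S" "Min W \<le> x" "x \<le> Max W"
  shows "x \<in> W"
proof (rule ccontr)
  assume "x \<notin> W"
  have p: "partition_on S \<pi>" and nc: "noncrossing \<pi>"
    using assms(2) by (auto simp: NC_ns_on_def NC_on_def)
  note block = partition_on_block_Min_Max[OF assms(1) p]
  obtain B where B: "B \<in> \<pi>" "x \<in> B"
    using partition_on_block_exists[OF p x(1)] by blast
  have "B \<noteq> W"
    using B \<open>x \<notin> W\<close> by auto
  have "Max W \<le> Max B"
    using first[OF block(4)[OF B(1)]] compatible_role_in_block(1)[OF assms(1-3) B(1) block(2)[OF B(1)]]
    by simp
  then have "Max W < Max B"
    using partition_on_block_unique[OF p B(1) assms(4) block(2)[OF B(1)]] block(2)[OF assms(4)] \<open>B \<noteq> W\<close>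
    by (metis order.not_eq_order_implies_strict)
  moreover have "Min W < x" "x < Max W"
    using x \<open>x \<notin> W\<close> block(1,2)[OF assms(4)] by (auto simp: le_less)
  ultimately show False
    using noncrossingD[OF nc assms(4) B(1) \<open>B \<noteq> W\<close>[symmetric]] block(1,2)[OF assms(4)] B(2)
      block(2)[OF B(1)] by blast
qed

lemma first_block_mem_compatible:
  assumes "finite S" "S \<noteq> {}" "\<pi> \<in> NC_ns_on S" "compatible \<pi> c S"
  shows "first_block c S \<in> \<pi>"
proof -
  have p: "partition_on S \<pi>"
    using assms(3) by (simp add: NC_ns_on_def NC_on_def)
  note role = compatible_role_in_block[OF assms(1,3,4)]
    and block = partition_on_block_Min_Max[OF assms(1) p]
  have closings: "finite {x\<in>S. c x = Closing}" "{x\<in>S. c x = Closing} \<noteq> {}"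
    using assms(1,2) finite_elements[OF assms(1) p] p
    by (auto simp: compatible_closing_positions[OF assms(1,3,4)] partition_on_def)
  define j where "j = first_closing c S"
  have j: "j \<in> S" "c j = Closing" and j_min: "\<And>x. x \<in> S \<Longrightarrow> c x = Closing \<Longrightarrow> j \<le> x"
    using Min_in[OF closings] closings(1) by (auto simp: j_def first_closing_def)
  obtain W where W: "W \<in> \<pi>" "j \<in> W"
    using partition_on_block_exists[OF p j(1)] by blast
  have j_Max: "j = Max W"
    using role(1)[OF W] j(2) by simp
  note W_interval = compatible_first_closed_block_interval[OF assms(1,3,4) W(1)]
  have "Max {y\<in>S. y < j \<and> opening_role (c y)} = Min W"
  proof (rule Max_eqI)
    show "finite {y\<in>S. y < j \<and> opening_role (c y)}"
      using assms(1) by simp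
    show "Min W \<in> {y\<in>S. y < j \<and> opening_role (c y)}"
      using block(1,3)[OF W(1)] role(2)[OF W(1) block(1)[OF W(1)]]
        NC_ns_on_Min_less_Max[OF assms(1,3) W(1)] j_Max by simp
    fix y assume y: "y \<in> {y\<in>S. y < j \<and> opening_role (c y)}"
    show "y \<le> Min W"
    proof (rule ccontr)
      assume "\<not> y \<le> Min W"
      then have "y \<in> W"
        using W_interval j_min y j_Max by simp
      then show False
        using role(2)[OF W(1)] y \<open>\<not> y \<le> Min W\<close> by simp
    qed
  qed
  then have "first_block c S = W"
    using W_interval j_min partition_on_block_subset[OF p W(1)] block(5)[OF W(1)] j_Max
    by (auto simp: first_block_def j_def[symmetric])
  then show ?thesis
    using W(1) by simp
qed

lemma compatible_remove_block:
  assumes "\<pi> \<in> NC_ns_on S" "W \<in> \<pi>" "compatible \<pi> c S"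
  shows "compatible (\<pi> - {W}) c (S - W)"
  unfolding compatible_def
proof
  fix x assume x: "x \<in> S - W"
  have p: "partition_on S \<pi>" and p': "partition_on (S - W) (\<pi> - {W})"
    using assms(1) NC_ns_on_remove_block[OF assms(1,2)] by (simp_all add: NC_ns_on_def NC_on_def)
  obtain B where B: "B \<in> \<pi> - {W}" "x \<in> B"
    using partition_on_block_exists[OF p'] x by blast
  then show "(c x = Closing \<longleftrightarrow> is_closing (\<pi> - {W}) x) \<and>
      (c x = Middle \<longleftrightarrow> \<not> is_closing (\<pi> - {W}) x \<and> \<not> is_opening (\<pi> - {W}) x)"
    using is_closing_is_opening_same_block[OF p p' _ B(1) B(2)] assms(3) x
    by (auto simp: compatible_def)
qed

lemma compatible_NC_ns_on_unique:
  "finite S \<Longrightarrow> \<pi>1 \<in> NC_ns_on S \<Longrightarrow> \<pi>2 \<in> NC_ns_on S \<Longrightarrow> compatible \<pi>1 c S \<Longrightarrow>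
    compatible \<pi>2 c S \<Longrightarrow> \<pi>1 = \<pi>2"
proof (induction "card S" arbitrary: S \<pi>1 \<pi>2 rule: less_induct)
  case less
  show ?case
  proof (cases "S = {}")
    case True
    then show ?thesis
      using less.prems by (simp add: NC_ns_on_def NC_on_def partition_on_empty)
  next
    case False
    define W where "W = first_block c S"
    have W: "W \<in> \<pi>1" "W \<in> \<pi>2"
      using first_block_mem_compatible[OF less.prems(1) False] less.prems by (auto simp: W_def)
    have "partition_on S \<pi>1"
      using less.prems(2) by (simp add: NC_ns_on_def NC_on_def)
    then have "Min W \<in> W" "Min W \<in> S"
      using partition_on_block_Min_Max(1,3)[OF less.prems(1) _ W(1)] by simp_all
    then have "card (S - W) < card S"
      using less.prems(1) by (intro psubset_card_mono) auto
    then have "\<pi>1 - {W} = \<pi>2 - {W}"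
      using less.hyps less.prems(1) NC_ns_on_remove_block less.prems(2,3) W
        compatible_remove_block[OF less.prems(2) W(1) less.prems(4)]
        compatible_remove_block[OF less.prems(3) W(2) less.prems(5)]
      by (meson finite_Diff)
    then show ?thesis
      using W by blast
  qed
qed

lemma admissible_Max_Closing:
  assumes "finite S" "S \<noteq> {}" "admissible c S"
  shows "c (Max S) = Closing"
proof -
  have "{x\<in>S. Max S < x} = {}"
    using Max_ge[OF assms(1)] by fastforce
  then have "height c {x\<in>S. Max S < x} = 0"
    unfolding height_def by (simp only: sum.empty)
  moreover have "demand (c (Max S)) \<le> height c {x\<in>S. Max S < x}"
    using assms(3) Max_in[OF assms(1,2)] by (simp add: admissible_def)
  ultimately show ?thesis
    by (cases "c (Max S)") simp_all
qed

lemma admissible_opening_before_first_closing: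
  assumes "finite S" "admissible c S" "j \<in> S" "c j = Closing"
    and first: "\<And>x. x \<in> S \<Longrightarrow> c x = Closing \<Longrightarrow> j \<le> x"
  shows "\<exists>x\<in>S. x < j \<and> opening_role (c x)"
proof (rule ccontr)
  assume "\<not> (\<exists>x\<in>S. x < j \<and> opening_role (c x))"
  then have "c x = Middle" if "x \<in> S" "x < j" for x
    using that first[OF that(1)] by (cases "c x") (auto simp: opening_role_def)
  then have "height c {x\<in>S. x < j} = 0"
    by (intro height_Middle) auto
  then have "height c (insert j {x\<in>S. x < j}) = 1"
    using assms(1,4) by (simp add: height_def)
  moreover have "S - {x\<in>S. j < x} = insert j {x\<in>S. x < j}"
    using assms(3) by auto
  ultimately have "height c S = 1 + height c {x\<in>S. j < x}"
    using height_Diff[OF assms(1), of "{x\<in>S. j < x}" c] by simp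
  then show False
    using assms(2-4) by (auto simp: admissible_def)
qed

lemma admissible_obtain_innermost_block:
  assumes "finite S" "S \<noteq> {}" "admissible c S"
  obtains i j where "i \<in> S" "j \<in> S" "i < j" "opening_role (c i)" "c j = Closing"
    "\<And>x. x \<in> S \<Longrightarrow> i < x \<Longrightarrow> x < j \<Longrightarrow> c x = Middle"
proof -
  have closings: "finite {x\<in>S. c x = Closing}" "{x\<in>S. c x = Closing} \<noteq> {}"
    using admissible_Max_Closing[OF assms] assms(1,2) Max_in by auto
  define j where "j = Min {x\<in>S. c x = Closing}"
  have j: "j \<in> S" "c j = Closing" and j_min: "\<And>x. x \<in> S \<Longrightarrow> c x = Closing \<Longrightarrow> j \<le> x"
    using Min_in[OF closings] closings(1) by (auto simp: j_def)
  let ?openings = "{x\<in>S. x < j \<and> opening_role (c x)}"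
  have "?openings \<noteq> {}"
    using admissible_opening_before_first_closing[OF assms(1,3) j j_min] by blast
  moreover have "finite ?openings"
    using assms(1) by simp
  ultimately have i: "Max ?openings \<in> ?openings"
    by (rule Max_in[rotated])
  have middle: "c x = Middle" if "x \<in> S" "Max ?openings < x" "x < j" for x
  proof -
    have "x \<notin> ?openings"
      using Max_ge[OF \<open>finite ?openings\<close>, of x] that(2) by linarith
    then show ?thesis
      using that j_min[OF that(1)] by (cases "c x") (auto simp: opening_role_def)
  qed
  show thesis
  proof (rule that)
    show "Max ?openings \<in> S" "Max ?openings < j" "opening_role (c (Max ?openings))"
      using i by simp_all
  qed (fact j middle)+
qed

lemma height_innermost_block:
  assumes "finite V" "i \<in> V" "j \<in> V" "i \<noteq> j" "opening_role (c i)" "c j = Closing"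
    and "\<And>x. x \<in> V \<Longrightarrow> x \<noteq> i \<Longrightarrow> x \<noteq> j \<Longrightarrow> c x = Middle"
  shows "height c V = 0"
proof -
  have "height c V = shift (c i) + height c (V - {i})"
    unfolding height_def by (rule sum.remove[OF assms(1,2)])
  moreover have "height c (V - {i}) = shift (c j) + height c (V - {i} - {j})"
    unfolding height_def by (rule sum.remove) (use assms(1,3,4) in auto)
  moreover have "height c (V - {i} - {j}) = 0"
    using assms(7) by (intro height_Middle) auto
  ultimately show ?thesis
    using assms(5,6) by (auto simp: opening_role_def)
qed

lemma admissible_Diff_interval:
  assumes "finite S" "admissible c S" "V \<subseteq> S" "interval_in S V" "V \<noteq> {}" "height c V = 0"
  shows "admissible c (S - V)"
proof -
  have "finite V"
    using assms(1,3) by (rule finite_subset[rotated])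
  have "demand (c p) \<le> height c {x\<in>S - V. p < x}" if p: "p \<in> S - V" for p
  proof (cases "p < Min V")
    case True
    then have "V \<subseteq> {x\<in>S. p < x}"
      using Min_le[OF \<open>finite V\<close>] assms(3) by fastforce
    moreover have "{x\<in>S. p < x} - V = {x\<in>S - V. p < x}"
      by auto
    ultimately have "height c {x\<in>S. p < x} = height c {x\<in>S - V. p < x}"
      using height_Diff[of "{x\<in>S. p < x}" V c] assms(1,6) by simp
    moreover have "demand (c p) \<le> height c {x\<in>S. p < x}"
      using p assms(2) by (simp add: admissible_def)
    ultimately show ?thesis
      by simp
  next
    case False
    then have "Max V < p"
      using p assms(4) by (auto simp: interval_in_def)
    then have "{x\<in>S - V. p < x} = {x\<in>S. p < x}"
      using Max_ge[OF \<open>finite V\<close>] by fastforce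
    then show ?thesis
      using p assms(2) by (simp add: admissible_def)
  qed
  moreover have "height c (S - V) = 0"
    using height_Diff[OF assms(1,3)] assms(2,6) by (simp add: admissible_def)
  ultimately show ?thesis
    by (simp add: admissible_def)
qed

lemma compatible_insert_block:
  assumes "partition_on S (insert V \<pi>)" "partition_on (S - V) \<pi>" "compatible \<pi> c (S - V)"
    and "finite V" "V \<noteq> {}" "c (Max V) = Closing" "opening_role (c (Min V))"
    and "\<And>x. x \<in> V \<Longrightarrow> Min V < x \<Longrightarrow> x < Max V \<Longrightarrow> c x = Middle"
  shows "compatible (insert V \<pi>) c S"
  unfolding compatible_def
proof
  fix x assume "x \<in> S"
  show "(c x = Closing \<longleftrightarrow> is_closing (insert V \<pi>) x) \<and>
      (c x = Middle \<longleftrightarrow> \<not> is_closing (insert V \<pi>) x \<and> \<not> is_opening (insert V \<pi>) x)"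
  proof (cases "x \<in> V")
    case True
    have "Min V \<le> x" "x \<le> Max V"
      using True assms(4) by simp_all
    moreover have "Min V \<noteq> Max V"
      using assms(6,7) by (auto simp: opening_role_def)
    ultimately show ?thesis
      using is_closing_iff[OF assms(1) insertI1 True] is_opening_iff[OF assms(1) insertI1 True]
        assms(6,7) assms(8)[OF True]
      by (cases "c x") (auto simp: opening_role_def le_less)
  next
    case False
    then obtain B where "B \<in> \<pi>" "x \<in> B"
      using partition_on_block_exists[OF assms(2)] \<open>x \<in> S\<close> by blast
    then show ?thesis
      using is_closing_is_opening_same_block[OF assms(1,2) _ \<open>B \<in> \<pi>\<close> \<open>x \<in> B\<close>] assms(3)
        \<open>x \<in> S\<close> False by (auto simp: compatible_def)
  qed
qed

lemma admissible_imp_compatible: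
  "finite S \<Longrightarrow> admissible c S \<Longrightarrow> \<exists>\<pi>\<in>NC_ns_on S. compatible \<pi> c S"
proof (induction "card S" arbitrary: S rule: less_induct)
  case less
  show ?case
  proof (cases "S = {}")
    case True
    then have "{} \<in> NC_ns_on S"
      by (simp add: NC_ns_on_def NC_on_def partition_on_empty noncrossing_def)
    then show ?thesis
      using True by (auto simp: compatible_def)
  next
    case False
    obtain i j where ij: "i \<in> S" "j \<in> S" "i < j" "opening_role (c i)" "c j = Closing"
      and middle: "\<And>x. x \<in> S \<Longrightarrow> i < x \<Longrightarrow> x < j \<Longrightarrow> c x = Middle"
      using admissible_obtain_innermost_block[OF less.prems(1) False less.prems(2)] by blast
    define V where "V = {x\<in>S. i \<le> x \<and> x \<le> j}"
    have V: "V \<subseteq> S" "finite V" "i \<in> V" "j \<in> V" "Min V = i" "Max V = j"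
      using less.prems(1) ij by (auto simp: V_def intro!: Min_eqI Max_eqI)
    have "height c V = 0"
      using ij(3-5) middle V(2-4)
      by (intro height_innermost_block[of V i j]) (auto simp: V_def)
    have interval: "interval_in S V"
      using V(5,6) by (auto simp: interval_in_def V_def)
    have "card (S - V) < card S"
      using V(1,3) less.prems(1) by (intro psubset_card_mono) auto
    moreover have "admissible c (S - V)"
      using admissible_Diff_interval[OF less.prems V(1) interval _ \<open>height c V = 0\<close>] V(3) by blast
    ultimately obtain \<pi> where \<pi>: "\<pi> \<in> NC_ns_on (S - V)" "compatible \<pi> c (S - V)"
      using less.hyps less.prems(1) by blast
    have "S - V \<union> V = S"
      using V(1) by blast
    then have NC: "insert V \<pi> \<in> NC_on S"
      using NC_on_insert_interval_block[of \<pi> "S - V" V] \<pi>(1) V(2,3) interval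
      by (auto simp: NC_ns_on_def)
    moreover have "card V \<noteq> 1"
      using V(3,4) ij(3) by (auto simp: card_1_singleton_iff)
    ultimately have "insert V \<pi> \<in> NC_ns_on S"
      using \<pi>(1) by (auto simp: NC_ns_on_def)
    moreover have "compatible (insert V \<pi>) c S"
      using NC \<pi> V ij(4,5) middle
      by (intro compatible_insert_block) (auto simp: NC_on_def NC_ns_on_def V_def)
    ultimately show ?thesis
      by blast
  qed
qed

section \<open>Colorings with nonzero value\<close>

text \<open>The roles of the positions in \<open>W\<^sub>C(\<rho>)\<close>, for a partition \<open>\<rho>\<close> of \<open>V\<close> whose least element
  plays the part of the first position.\<close>

definition WC_roles :: "nat set set \<Rightarrow> nat set \<Rightarrow> nat \<Rightarrow> role" where
  "WC_roles \<rho> V i = (if is_closing \<rho> i then Closing else if i = Min V then Opening_phi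
     else if is_opening \<rho> i then Opening_gamma else Middle)"

lemma compatible_WC_roles:
  assumes "finite V" "\<rho> \<in> NC_ns_on V"
  shows "compatible \<rho> (WC_roles \<rho> V) V"
  unfolding compatible_def
proof
  fix i assume "i \<in> V"
  have p: "partition_on V \<rho>"
    using assms(2) by (simp add: NC_ns_on_def NC_on_def)
  obtain B where B: "B \<in> \<rho>" "i \<in> B"
    using partition_on_block_exists[OF p \<open>i \<in> V\<close>] by blast
  have "is_opening \<rho> i" if "i = Min V"
    using Min_block_eq_Min[OF assms(1) p B(1)] is_opening_iff[OF p B] B(2) that by simp
  then show "(WC_roles \<rho> V i = Closing \<longleftrightarrow> is_closing \<rho> i) \<and>
      (WC_roles \<rho> V i = Middle \<longleftrightarrow> \<not> is_closing \<rho> i \<and> \<not> is_opening \<rho> i)"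
    by (auto simp: WC_roles_def)
qed

lemma admissible_WC_roles:
  assumes "finite V" "\<rho> \<in> NC_tilde_ns_on V"
  shows "admissible (WC_roles \<rho> V) V"
proof -
  let ?c = "WC_roles \<rho> V"
  have ns: "\<rho> \<in> NC_ns_on V" and p: "partition_on V \<rho>"
    using assms(2) by (auto simp: NC_tilde_ns_on_def NC_ns_on_def NC_on_def)
  obtain B0 where B0: "B0 \<in> \<rho>" "Min B0 = Min V" "Max B0 = Max V"
    using assms(2) Min_block_eq_Min[OF assms(1) p] Max_block_eq_Max[OF assms(1) p]
    by (auto simp: NC_tilde_ns_on_def)
  note compatible = compatible_WC_roles[OF assms(1) ns]
  note block = partition_on_block_Min_Max[OF assms(1) p]
  have "demand (?c q) \<le> height ?c {x\<in>V. q < x}" if "q \<in> V" for q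
  proof -
    let ?open = "{B\<in>\<rho>. Min B \<le> q \<and> q < Max B}"
    have fin: "finite ?open"
      using finite_elements[OF assms(1) p] by simp
    obtain B where B: "B \<in> \<rho>" "q \<in> B"
      using partition_on_block_exists[OF p \<open>q \<in> V\<close>] by blast
    have "B \<in> ?open" if "?c q \<noteq> Closing"
      using that is_closing_iff[OF p B] block(5)[OF B] B(1) by (auto simp: WC_roles_def le_less)
    \<comment> \<open>a \<open>\<gamma>\<close>-opening lies strictly inside the block containing \<open>Min V\<close> and \<open>Max V\<close>\<close>
    moreover have "B0 \<in> ?open" and "B \<noteq> B0" if "?c q = Opening_gamma"
    proof -
      have "q = Min B" "q \<noteq> Min V" "q < Max B"
        using that is_opening_iff[OF p B] is_closing_iff[OF p B] block(5)[OF B]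
        by (auto simp: WC_roles_def split: if_splits)
      moreover have "Min V \<le> q" "Max B \<le> Max V"
        using \<open>q \<in> V\<close> assms(1) block(4)[OF B(1)] by simp_all
      ultimately show "B0 \<in> ?open" "B \<noteq> B0"
        using B0 B(1) by auto
    qed
    ultimately have "?c q \<noteq> Closing \<Longrightarrow> 1 \<le> card ?open"
      and "?c q = Opening_gamma \<Longrightarrow> 2 \<le> card ?open"
      using fin card_mono[OF fin, of "{B, B0}"] by (auto simp: Suc_le_eq card_gt_0_iff)
    then show ?thesis
      using height_above_compatible[OF assms(1) ns compatible] by (cases "?c q") auto
  qed
  then show ?thesis
    using height_compatible_eq_0[OF assms(1) ns compatible] by (simp add: admissible_def)
qed

definition block_of :: "nat set set \<Rightarrow> nat \<Rightarrow> nat set" where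
  "block_of \<sigma> i = (THE V. V \<in> \<sigma> \<and> i \<in> V)"

lemma block_of_eq: "partition_on S \<sigma> \<Longrightarrow> V \<in> \<sigma> \<Longrightarrow> i \<in> V \<Longrightarrow> block_of \<sigma> i = V"
  unfolding block_of_def by (rule the_equality) (auto dest: partition_on_block_unique)

definition nested_coloring :: "nat set set \<Rightarrow> (nat set \<Rightarrow> nat set set) \<Rightarrow> nat \<Rightarrow> role" where
  "nested_coloring \<sigma> \<rho> i = WC_roles (\<rho> (block_of \<sigma> i)) (block_of \<sigma> i) i"

lemma nested_coloring_eq:
  "partition_on S \<sigma> \<Longrightarrow> V \<in> \<sigma> \<Longrightarrow> i \<in> V \<Longrightarrow> nested_coloring \<sigma> \<rho> i = WC_roles (\<rho> V) V i"
  by (simp add: nested_coloring_def block_of_eq)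

text \<open>A nested pair refines every block \<open>V\<close> of \<open>\<sigma> \<in> NC(S)\<close> by some \<open>\<rho> V \<in> NC\<^sup>~\<^sub>n\<^sub>s(V)\<close>; its
  nested coloring gives each block of \<open>\<sigma>\<close> its own \<open>W\<^sub>C\<close>-roles. These colorings are exactly the
  ones with nonzero value, and they determine the nested pair.\<close>

definition nested_pairs :: "nat set \<Rightarrow> (nat set set \<times> (nat set \<Rightarrow> nat set set)) set" where
  "nested_pairs S = Sigma (NC_on S) (\<lambda>\<sigma>. PiE \<sigma> NC_tilde_ns_on)"

lemma nested_pairs_empty: "nested_pairs {} = {({}, \<lambda>_. undefined)}"
  by (auto simp: nested_pairs_def NC_on_def partition_on_empty noncrossing_def)

lemma nested_pairsD:
  assumes "(\<sigma>, \<rho>) \<in> nested_pairs S"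
  shows "\<sigma> \<in> NC_on S" "partition_on S \<sigma>" "V \<in> \<sigma> \<Longrightarrow> \<rho> V \<in> NC_tilde_ns_on V"
    "V \<in> \<sigma> \<Longrightarrow> partition_on V (\<rho> V)"
proof -
  show "\<sigma> \<in> NC_on S" and \<rho>: "V \<in> \<sigma> \<Longrightarrow> \<rho> V \<in> NC_tilde_ns_on V"
    using assms by (auto simp: nested_pairs_def)
  then show "partition_on S \<sigma>" and "V \<in> \<sigma> \<Longrightarrow> partition_on V (\<rho> V)"
    by (simp_all add: NC_on_def NC_tilde_ns_on_def NC_ns_on_def)
qed

lemma finite_NC_tilde_ns_on: "finite V \<Longrightarrow> finite (NC_tilde_ns_on V)"
  using finite_NC_on[of V] by (rule finite_subset[rotated]) (auto simp: NC_tilde_ns_on_def NC_ns_on_def)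

lemma nested_pairs_remove_block:
  assumes "(\<sigma>, \<rho>) \<in> nested_pairs S" "V \<in> \<sigma>"
  shows "(\<sigma> - {V}, restrict \<rho> (\<sigma> - {V})) \<in> nested_pairs (S - V)"
  using assms NC_on_remove_block[of \<sigma> S V] by (auto simp: nested_pairs_def)

lemma nested_coloring_remove_block:
  assumes "(\<sigma>, \<rho>) \<in> nested_pairs S" "V \<in> \<sigma>" "i \<in> S - V"
  shows "nested_coloring (\<sigma> - {V}) (restrict \<rho> (\<sigma> - {V})) i = nested_coloring \<sigma> \<rho> i"
proof -
  have p: "partition_on S \<sigma>" and p': "partition_on (S - V) (\<sigma> - {V})"
    using nested_pairsD(2)[OF assms(1)] nested_pairsD(2)[OF nested_pairs_remove_block[OF assms(1,2)]] .
  obtain W where W: "W \<in> \<sigma> - {V}" "i \<in> W"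
    using partition_on_block_exists[OF p' assms(3)] by blast
  then show ?thesis
    using nested_coloring_eq[OF p' W] nested_coloring_eq[OF p _ W(2)] by simp
qed

definition nested_partition :: "nat set set \<Rightarrow> (nat set \<Rightarrow> nat set set) \<Rightarrow> nat set set" where
  "nested_partition \<sigma> \<rho> = (\<Union>V\<in>\<sigma>. \<rho> V)"

lemma partition_on_nested_partition:
  assumes "(\<sigma>, \<rho>) \<in> nested_pairs S"
  shows "partition_on S (nested_partition \<sigma> \<rho>)"
proof (rule partition_onI)
  note p = nested_pairsD(2)[OF assms] and pV = nested_pairsD(4)[OF assms]
  have "\<Union>(nested_partition \<sigma> \<rho>) = (\<Union>V\<in>\<sigma>. \<Union>(\<rho> V))"
    by (auto simp: nested_partition_def)
  also have "\<dots> = S"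
    using pV partition_onD1[OF p] by (auto simp: partition_on_def)
  finally show "\<Union>(nested_partition \<sigma> \<rho>) = S" .
  show "{} \<notin> nested_partition \<sigma> \<rho>"
    using pV by (auto simp: nested_partition_def partition_on_def)
  fix A B assume "A \<in> nested_partition \<sigma> \<rho>" "B \<in> nested_partition \<sigma> \<rho>" "A \<noteq> B"
  then obtain V W where V: "V \<in> \<sigma>" "A \<in> \<rho> V" and W: "W \<in> \<sigma>" "B \<in> \<rho> W"
    by (auto simp: nested_partition_def)
  show "disjnt A B"
  proof (cases "V = W")
    case True
    then show ?thesis
      using partition_on_block_unique[OF pV[OF V(1)] V(2)] W(2) \<open>A \<noteq> B\<close> by (auto simp: disjnt_def)
  next
    case False
    then have "V \<inter> W = {}"
      using partition_on_block_unique[OF p V(1) W(1)] by blast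
    then show ?thesis
      using partition_on_block_subset[OF pV[OF V(1)] V(2)] partition_on_block_subset[OF pV[OF W(1)] W(2)]
      by (auto simp: disjnt_def)
  qed
qed

lemma noncrossing_nested_partition:
  assumes "(\<sigma>, \<rho>) \<in> nested_pairs S"
  shows "noncrossing (nested_partition \<sigma> \<rho>)"
  unfolding noncrossing_def
proof (intro ballI impI notI)
  note pV = nested_pairsD(4)[OF assms]
  have nc: "noncrossing \<sigma>" and ncV: "V \<in> \<sigma> \<Longrightarrow> noncrossing (\<rho> V)" for V
    using nested_pairsD(1,3)[OF assms] by (simp_all add: NC_on_def NC_tilde_ns_on_def NC_ns_on_def)
  fix A B assume A: "A \<in> nested_partition \<sigma> \<rho>" and B: "B \<in> nested_partition \<sigma> \<rho>"
    and "A \<noteq> B" and "\<exists>a b c d. a < b \<and> b < c \<and> c < d \<and> a \<in> A \<and> c \<in> A \<and> b \<in> B \<and> d \<in> B"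
  then obtain a b c d where abcd: "a < b" "b < c" "c < d" "a \<in> A" "c \<in> A" "b \<in> B" "d \<in> B"
    by blast
  obtain V W where V: "V \<in> \<sigma>" "A \<in> \<rho> V" and W: "W \<in> \<sigma>" "B \<in> \<rho> W"
    using A B by (auto simp: nested_partition_def)
  show False
  proof (cases "V = W")
    case True
    then show False
      using noncrossingD[OF ncV[OF V(1)] V(2) _ \<open>A \<noteq> B\<close> abcd] W(2) by simp
  next
    case False
    then show False
      using noncrossingD[OF nc V(1) W(1) False abcd(1-3)] abcd(4-7)
        partition_on_block_subset[OF pV[OF V(1)] V(2)] partition_on_block_subset[OF pV[OF W(1)] W(2)]
      by blast
  qed
qed

lemma nested_partition_NC_ns_on:
  assumes "(\<sigma>, \<rho>) \<in> nested_pairs S"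
  shows "nested_partition \<sigma> \<rho> \<in> NC_ns_on S"
proof -
  have "card B \<noteq> 1" if "B \<in> nested_partition \<sigma> \<rho>" for B
    using that nested_pairsD(3)[OF assms]
    by (auto simp: nested_partition_def NC_tilde_ns_on_def NC_ns_on_def)
  then show ?thesis
    using partition_on_nested_partition[OF assms] noncrossing_nested_partition[OF assms]
    by (simp add: NC_ns_on_def NC_on_def)
qed

lemma nested_partition_mem: "V \<in> \<sigma> \<Longrightarrow> B \<in> \<rho> V \<Longrightarrow> B \<in> nested_partition \<sigma> \<rho>"
  by (auto simp: nested_partition_def)

lemma compatible_nested_partition:
  assumes "finite S" "(\<sigma>, \<rho>) \<in> nested_pairs S"
  shows "compatible (nested_partition \<sigma> \<rho>) (nested_coloring \<sigma> \<rho>) S"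
  unfolding compatible_def
proof
  fix i assume "i \<in> S"
  note p = nested_pairsD(2)[OF assms(2)] and pV = nested_pairsD(4)[OF assms(2)]
  obtain V where V: "V \<in> \<sigma>" "i \<in> V"
    using partition_on_block_exists[OF p \<open>i \<in> S\<close>] by blast
  obtain B where B: "B \<in> \<rho> V" "i \<in> B"
    using partition_on_block_exists[OF pV[OF V(1)] V(2)] by blast
  have "compatible (\<rho> V) (WC_roles (\<rho> V) V) V"
    using compatible_WC_roles partition_on_block_finite[OF assms(1) p V(1)] nested_pairsD(3)[OF assms(2) V(1)]
    by (simp add: NC_tilde_ns_on_def)
  then show "(nested_coloring \<sigma> \<rho> i = Closing \<longleftrightarrow> is_closing (nested_partition \<sigma> \<rho>) i) \<and>
      (nested_coloring \<sigma> \<rho> i = Middle \<longleftrightarrow>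
        \<not> is_closing (nested_partition \<sigma> \<rho>) i \<and> \<not> is_opening (nested_partition \<sigma> \<rho>) i)"
    using is_closing_is_opening_same_block[OF pV[OF V(1)] partition_on_nested_partition[OF assms(2)]
        B(1) nested_partition_mem[where \<rho> = \<rho>, OF V(1) B(1)] B(2)]
      nested_coloring_eq[OF p V] V(2) by (simp add: compatible_def)
qed

lemma nested_coloring_Opening_phi_iff:
  assumes "finite S" "(\<sigma>, \<rho>) \<in> nested_pairs S" "V \<in> \<sigma>" "i \<in> V"
  shows "nested_coloring \<sigma> \<rho> i = Opening_phi \<longleftrightarrow> i = Min V"
proof -
  note p = nested_pairsD(2)[OF assms(2)] and pV = nested_pairsD(4)[OF assms(2,3)]
  have fV: "finite V" and ns: "\<rho> V \<in> NC_ns_on V"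
    using partition_on_block_finite[OF assms(1) p assms(3)] nested_pairsD(3)[OF assms(2,3)]
    by (simp_all add: NC_tilde_ns_on_def)
  obtain B where B: "B \<in> \<rho> V" "Min V \<in> B"
    using partition_on_block_exists[OF pV] Min_in[OF fV] assms(4) by blast
  have "\<not> is_closing (\<rho> V) (Min V)"
    using is_closing_iff[OF pV B] Min_block_eq_Min[OF fV pV B] NC_ns_on_Min_less_Max[OF fV ns B(1)]
    by simp
  then show ?thesis
    using nested_coloring_eq[OF p assms(3,4)] by (auto simp: WC_roles_def)
qed

lemma nested_coloring_Opening_phi_positions:
  assumes "finite S" "(\<sigma>, \<rho>) \<in> nested_pairs S"
  shows "{i\<in>S. nested_coloring \<sigma> \<rho> i = Opening_phi} = Min ` \<sigma>"
proof -
  note p = nested_pairsD(2)[OF assms(2)]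
  have "i \<in> Min ` \<sigma> \<longleftrightarrow> nested_coloring \<sigma> \<rho> i = Opening_phi" if "i \<in> S" for i
  proof -
    obtain V where V: "V \<in> \<sigma>" "i \<in> V"
      using partition_on_block_exists[OF p \<open>i \<in> S\<close>] by blast
    have "i \<in> Min ` \<sigma> \<longleftrightarrow> i = Min V"
    proof
      assume "i \<in> Min ` \<sigma>"
      then obtain B where "B \<in> \<sigma>" "i = Min B"
        by blast
      then show "i = Min V"
        using partition_on_block_unique[OF p _ V(1) _ V(2)] partition_on_block_Min_Max(1)[OF assms(1) p]
        by metis
    qed (use V(1) in blast)
    then show ?thesis
      using nested_coloring_Opening_phi_iff[OF assms V] by simp
  qed
  moreover have "Min ` \<sigma> \<subseteq> S"
    using partition_on_block_Min_Max(3)[OF assms(1) p] by blast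
  ultimately show ?thesis
    by blast
qed

lemma interval_in_eq: "finite V \<Longrightarrow> V \<subseteq> S \<Longrightarrow> interval_in S V \<Longrightarrow> V = {x\<in>S. Min V \<le> x \<and> x \<le> Max V}"
  by (auto simp: interval_in_def)

lemma NC_on_last_opened_block_interval:
  assumes "finite S" "\<sigma> \<in> NC_on S" "V \<in> \<sigma>" "Min V = Max (Min ` \<sigma>)"
  shows "interval_in S V"
  unfolding interval_in_def
proof (intro ballI impI)
  have p: "partition_on S \<sigma>" and nc: "noncrossing \<sigma>"
    using assms(2) by (auto simp: NC_on_def)
  note block = partition_on_block_Min_Max[OF assms(1) p]
  fix x assume x: "x \<in> S" "Min V \<le> x \<and> x \<le> Max V"
  show "x \<in> V"
  proof (rule ccontr)
    assume "x \<notin> V"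
    obtain W where W: "W \<in> \<sigma>" "x \<in> W"
      using partition_on_block_exists[OF p x(1)] by blast
    have "W \<noteq> V"
      using W \<open>x \<notin> V\<close> by auto
    have lt: "Min V < x" "x < Max V"
      using x \<open>x \<notin> V\<close> block(1,2)[OF assms(3)] by (auto simp: le_less)
    have "Min V < y" if "y \<in> W" for y
    proof -
      have "y \<noteq> Min V" "y \<noteq> Max V"
        using partition_on_block_unique[OF p W(1) assms(3) that] block(1,2)[OF assms(3)] \<open>W \<noteq> V\<close> by auto
      moreover have "\<not> y < Min V"
        using noncrossingD[OF nc W(1) assms(3) \<open>W \<noteq> V\<close> _ lt that W(2) block(1,2)[OF assms(3)]] by blast
      moreover have "\<not> Max V < y"
        using noncrossingD[OF nc assms(3) W(1) \<open>W \<noteq> V\<close>[symmetric] lt _ block(1,2)[OF assms(3)] W(2) that]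
        by blast
      ultimately show ?thesis
        by linarith
    qed
    then have "Min V < Min W"
      using block(1)[OF W(1)] by blast
    moreover have "Min W \<le> Max (Min ` \<sigma>)"
      using finite_elements[OF assms(1) p] W(1) by simp
    ultimately show False
      using assms(4) by simp
  qed
qed

lemma nested_partition_restrict:
  assumes "(\<sigma>, \<rho>) \<in> nested_pairs S" "V \<in> \<sigma>"
  shows "\<rho> V = {B \<in> nested_partition \<sigma> \<rho>. B \<subseteq> V}"
proof
  note p = nested_pairsD(2)[OF assms(1)] and pW = nested_pairsD(4)[OF assms(1)]
  show "\<rho> V \<subseteq> {B \<in> nested_partition \<sigma> \<rho>. B \<subseteq> V}"
    using nested_partition_mem[OF assms(2)] partition_on_block_subset[OF pW[OF assms(2)]] by blast
  show "{B \<in> nested_partition \<sigma> \<rho>. B \<subseteq> V} \<subseteq> \<rho> V"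
  proof
    fix B assume B: "B \<in> {B \<in> nested_partition \<sigma> \<rho>. B \<subseteq> V}"
    then obtain W where W: "W \<in> \<sigma>" "B \<in> \<rho> W"
      by (auto simp: nested_partition_def)
    obtain b where "b \<in> B"
      using partition_on_block_nonempty[OF pW[OF W(1)] W(2)] by blast
    then have "W = V"
      using partition_on_block_unique[OF p W(1) assms(2)] partition_on_block_subset[OF pW[OF W(1)] W(2)] B
      by blast
    then show "B \<in> \<rho> V"
      using W by simp
  qed
qed

lemma nested_partition_block_Max:
  assumes "finite S" "(\<sigma>, \<rho>) \<in> nested_pairs S" "V \<in> \<sigma>" "B \<in> nested_partition \<sigma> \<rho>" "Min V \<in> B"
  shows "Max B = Max V"
proof -
  note pV = nested_pairsD(4)[OF assms(2,3)]
  obtain B' where B': "B' \<in> \<rho> V" "Min V \<in> B'" "Max V \<in> B'"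
    using nested_pairsD(3)[OF assms(2,3)] by (auto simp: NC_tilde_ns_on_def)
  have "B' = B"
    using partition_on_block_unique[OF partition_on_nested_partition[OF assms(2)]
        nested_partition_mem[where \<rho> = \<rho>, OF assms(3) B'(1)] assms(4) B'(2) assms(5)] .
  then show ?thesis
    using Max_block_eq_Max[OF _ pV B'(1) B'(3)] partition_on_block_finite[OF assms(1)
        nested_pairsD(2)[OF assms(2)] assms(3)] by simp
qed

text \<open>The block of \<open>\<sigma>\<close> opened by the last \<open>\<phi>\<close>-opening is an interval that can be read off from the
  coloring; removing it drives the injectivity and surjectivity inductions.\<close>

definition last_phi_block :: "(nat \<Rightarrow> role) \<Rightarrow> nat set set \<Rightarrow> nat set \<Rightarrow> nat set" where
  "last_phi_block c \<pi> S =
     (let i = Max {x\<in>S. c x = Opening_phi} in {x\<in>S. i \<le> x \<and> x \<le> Max (block_of \<pi> i)})"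

lemma last_phi_block_nested:
  assumes "finite S" "S \<noteq> {}" "(\<sigma>, \<rho>) \<in> nested_pairs S"
  shows "last_phi_block (nested_coloring \<sigma> \<rho>) (nested_partition \<sigma> \<rho>) S \<in> \<sigma>"
proof -
  note p = nested_pairsD(2)[OF assms(3)]
  have "finite \<sigma>" "\<sigma> \<noteq> {}"
    using finite_elements[OF assms(1) p] p assms(2) by (auto simp: partition_on_def)
  then obtain V where V: "V \<in> \<sigma>" "Min V = Max (Min ` \<sigma>)"
    by (metis (no_types, lifting) Max_in empty_is_image finite_imageI imageE)
  have "Min V \<in> S"
    using partition_on_block_Min_Max(3)[OF assms(1) p V(1)] .
  then obtain B where B: "B \<in> nested_partition \<sigma> \<rho>" "Min V \<in> B"
    using partition_on_block_exists[OF partition_on_nested_partition[OF assms(3)]] by blast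
  have "last_phi_block (nested_coloring \<sigma> \<rho>) (nested_partition \<sigma> \<rho>) S =
      {x\<in>S. Min V \<le> x \<and> x \<le> Max V}"
    using block_of_eq[OF partition_on_nested_partition[OF assms(3)] B]
      nested_partition_block_Max[OF assms(1,3) V(1) B] V(2)
    by (simp add: last_phi_block_def nested_coloring_Opening_phi_positions[OF assms(1,3)])
  also have "\<dots> = V"
    using interval_in_eq[OF partition_on_block_finite[OF assms(1) p V(1)]
        partition_on_block_subset[OF p V(1)]
        NC_on_last_opened_block_interval[OF assms(1) nested_pairsD(1)[OF assms(3)] V]] by simp
  finally show ?thesis
    using V(1) by simp
qed

lemma nested_coloring_eq_obtain_common_block:
  assumes "finite S" "S \<noteq> {}" "(\<sigma>1, \<rho>1) \<in> nested_pairs S" "(\<sigma>2, \<rho>2) \<in> nested_pairs S"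
    and eq: "\<And>i. i \<in> S \<Longrightarrow> nested_coloring \<sigma>1 \<rho>1 i = nested_coloring \<sigma>2 \<rho>2 i"
  obtains I where "I \<in> \<sigma>1" "I \<in> \<sigma>2" "\<rho>1 I = \<rho>2 I"
proof -
  have "compatible (nested_partition \<sigma>2 \<rho>2) (nested_coloring \<sigma>1 \<rho>1) S"
    using compatible_nested_partition[OF assms(1,4)] eq by (simp add: compatible_def)
  then have \<pi>: "nested_partition \<sigma>1 \<rho>1 = nested_partition \<sigma>2 \<rho>2"
    using compatible_NC_ns_on_unique[OF assms(1) nested_partition_NC_ns_on[OF assms(3)]
        nested_partition_NC_ns_on[OF assms(4)] compatible_nested_partition[OF assms(1,3)]] by blast
  define I where "I = last_phi_block (nested_coloring \<sigma>1 \<rho>1) (nested_partition \<sigma>1 \<rho>1) S"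
  have "{x\<in>S. nested_coloring \<sigma>1 \<rho>1 x = Opening_phi} = {x\<in>S. nested_coloring \<sigma>2 \<rho>2 x = Opening_phi}"
    using eq by auto
  then have "I = last_phi_block (nested_coloring \<sigma>2 \<rho>2) (nested_partition \<sigma>2 \<rho>2) S"
    using \<pi> by (simp add: I_def last_phi_block_def)
  then have I: "I \<in> \<sigma>1" "I \<in> \<sigma>2"
    using last_phi_block_nested[OF assms(1,2,3)] last_phi_block_nested[OF assms(1,2,4)]
    by (simp_all add: I_def)
  moreover have "\<rho>1 I = \<rho>2 I"
    using nested_partition_restrict[OF assms(3) I(1)] nested_partition_restrict[OF assms(4) I(2)] \<pi>
    by simp
  ultimately show thesis
    by (rule that)
qed

lemma nested_coloring_inj:
  "finite S \<Longrightarrow> (\<sigma>1, \<rho>1) \<in> nested_pairs S \<Longrightarrow> (\<sigma>2, \<rho>2) \<in> nested_pairs S \<Longrightarrow>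
    (\<And>i. i \<in> S \<Longrightarrow> nested_coloring \<sigma>1 \<rho>1 i = nested_coloring \<sigma>2 \<rho>2 i) \<Longrightarrow> \<sigma>1 = \<sigma>2 \<and> \<rho>1 = \<rho>2"
proof (induction "card S" arbitrary: S \<sigma>1 \<rho>1 \<sigma>2 \<rho>2 rule: less_induct)
  case less
  note S = less.prems(1) and \<sigma>\<rho>1 = less.prems(2) and \<sigma>\<rho>2 = less.prems(3) and eq = less.prems(4)
  show ?case
  proof (cases "S = {}")
    case True
    then show ?thesis
      using \<sigma>\<rho>1 \<sigma>\<rho>2 by (simp add: nested_pairs_empty)
  next
    case False
    obtain I where I: "I \<in> \<sigma>1" "I \<in> \<sigma>2" "\<rho>1 I = \<rho>2 I"
      using nested_coloring_eq_obtain_common_block[OF S False \<sigma>\<rho>1 \<sigma>\<rho>2 eq] by blast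
    have "Min I \<in> I" "I \<subseteq> S"
      using partition_on_block_Min_Max(1)[OF S nested_pairsD(2)[OF \<sigma>\<rho>1] I(1)]
        partition_on_block_subset[OF nested_pairsD(2)[OF \<sigma>\<rho>1] I(1)] by simp_all
    then have "card (S - I) < card S"
      using S by (intro psubset_card_mono) auto
    moreover have "nested_coloring (\<sigma>1 - {I}) (restrict \<rho>1 (\<sigma>1 - {I})) i =
        nested_coloring (\<sigma>2 - {I}) (restrict \<rho>2 (\<sigma>2 - {I})) i" if "i \<in> S - I" for i
      using nested_coloring_remove_block[OF \<sigma>\<rho>1 I(1) that]
        nested_coloring_remove_block[OF \<sigma>\<rho>2 I(2) that] eq that by simp
    ultimately have IH: "\<sigma>1 - {I} = \<sigma>2 - {I} \<and> restrict \<rho>1 (\<sigma>1 - {I}) = restrict \<rho>2 (\<sigma>2 - {I})"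
      using less.hyps[OF _ finite_Diff[OF S] nested_pairs_remove_block[OF \<sigma>\<rho>1 I(1)]
          nested_pairs_remove_block[OF \<sigma>\<rho>2 I(2)]] by blast
    then have "\<sigma>1 = \<sigma>2"
      using I by blast
    moreover have "\<rho>1 V = \<rho>2 V" if "V \<in> \<sigma>1" for V
    proof (cases "V = I")
      case False
      then show ?thesis
        using fun_cong[OF conjunct2[OF IH], of V] that \<open>\<sigma>1 = \<sigma>2\<close> by simp
    qed (use I(3) in simp)
    moreover have "\<rho>1 \<in> PiE \<sigma>1 NC_tilde_ns_on" "\<rho>2 \<in> PiE \<sigma>2 NC_tilde_ns_on"
      using \<sigma>\<rho>1 \<sigma>\<rho>2 by (simp_all add: nested_pairs_def)
    ultimately show ?thesis
      using PiE_ext[of \<rho>1 \<sigma>1 NC_tilde_ns_on \<rho>2] by simp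
  qed
qed

lemma NC_on_block_hull_closed:
  assumes "finite S" "\<pi> \<in> NC_on S" "B \<in> \<pi>" "C \<in> \<pi>" "x \<in> C" "Min B \<le> x" "x \<le> Max B"
  shows "C \<subseteq> {y\<in>S. Min B \<le> y \<and> y \<le> Max B}"
proof (cases "C = B")
  case True
  then show ?thesis
    using assms(1-3) by (auto simp: NC_on_def dest: partition_on_block_Min_Max(5) partition_on_block_subset)
next
  case False
  have p: "partition_on S \<pi>" and nc: "noncrossing \<pi>"
    using assms(2) by (auto simp: NC_on_def)
  note block = partition_on_block_Min_Max[OF assms(1) p assms(3)]
  have "x \<noteq> Min B" "x \<noteq> Max B"
    using partition_on_block_unique[OF p assms(4,3) assms(5)] block(1,2) False by auto
  then have x: "Min B < x" "x < Max B"
    using assms(6,7) by simp_all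
  show ?thesis
  proof
    fix y assume "y \<in> C"
    have "\<not> y < Min B"
      using noncrossingD[OF nc assms(4,3) False _ x \<open>y \<in> C\<close> assms(5) block(1,2)] by blast
    moreover have "\<not> Max B < y"
      using noncrossingD[OF nc assms(3,4) False[symmetric] x _ block(1,2) assms(5) \<open>y \<in> C\<close>] by blast
    ultimately show "y \<in> {y\<in>S. Min B \<le> y \<and> y \<le> Max B}"
      using partition_on_block_subset[OF p assms(4)] \<open>y \<in> C\<close> by auto
  qed
qed

lemma NC_ns_on_hull_blocks:
  assumes "finite S" "\<pi> \<in> NC_ns_on S" "B \<in> \<pi>"
  defines "I \<equiv> {x\<in>S. Min B \<le> x \<and> x \<le> Max B}"
  shows "{C\<in>\<pi>. C \<subseteq> I} \<in> NC_tilde_ns_on I"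
proof -
  have NC: "\<pi> \<in> NC_on S" and p: "partition_on S \<pi>"
    using assms(2) by (auto simp: NC_ns_on_def NC_on_def)
  note block = partition_on_block_Min_Max[OF assms(1) p assms(3)]
  have "I \<subseteq> \<Union>{C\<in>\<pi>. C \<subseteq> I}"
  proof
    fix x assume "x \<in> I"
    then obtain C where "C \<in> \<pi>" "x \<in> C"
      using partition_on_block_exists[OF p] by (auto simp: I_def)
    then show "x \<in> \<Union>{C\<in>\<pi>. C \<subseteq> I}"
      using NC_on_block_hull_closed[OF assms(1) NC assms(3)] \<open>x \<in> I\<close> by (auto simp: I_def)
  qed
  then have "partition_on I {C\<in>\<pi>. C \<subseteq> I}"
    using p by (auto simp: partition_on_def disjoint_def)
  moreover have "B \<in> {C\<in>\<pi>. C \<subseteq> I}" "Min I = Min B" "Max I = Max B"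
    using assms(3) block partition_on_block_subset[OF p assms(3)]
    by (auto simp: I_def intro!: Min_eqI Max_eqI)
  ultimately show ?thesis
    using assms(2) block(1,2) noncrossing_subset[of \<pi> "{C\<in>\<pi>. C \<subseteq> I}"]
    by (auto simp: NC_tilde_ns_on_def NC_ns_on_def NC_on_def)
qed

lemma WC_roles_hull_blocks:
  assumes "finite S" "\<pi> \<in> NC_ns_on S" "compatible \<pi> c S" "B \<in> \<pi>" "c (Min B) = Opening_phi"
    and "\<And>x. x \<in> S \<Longrightarrow> c x = Opening_phi \<Longrightarrow> x \<le> Min B"
  defines "I \<equiv> {x\<in>S. Min B \<le> x \<and> x \<le> Max B}"
  assumes "x \<in> I"
  shows "WC_roles {C\<in>\<pi>. C \<subseteq> I} I x = c x"
proof -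
  have p: "partition_on S \<pi>" and pI: "partition_on I {C\<in>\<pi>. C \<subseteq> I}"
    using assms(2) NC_ns_on_hull_blocks[OF assms(1,2,4)]
    by (auto simp: NC_ns_on_def NC_on_def NC_tilde_ns_on_def I_def)
  note block = partition_on_block_Min_Max[OF assms(1) p assms(4)]
  obtain C where C: "C \<in> \<pi>" "C \<subseteq> I" "x \<in> C"
    using partition_on_block_exists[OF pI assms(8)] by blast
  note same = is_closing_is_opening_same_block[OF pI p _ C(1) C(3)]
  have "Min I = Min B"
    using block by (auto simp: I_def intro!: Min_eqI)
  moreover have "x \<in> S" "Min B \<le> x"
    using assms(8) by (simp_all add: I_def)
  ultimately show ?thesis
    using same C compatible_role_in_block[OF assms(1-3) C(1,3)] assms(3,5) assms(6)[of x]
      is_closing_iff[OF p C(1,3)] is_opening_iff[OF p C(1,3)]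
    by (cases "c x") (auto simp: WC_roles_def opening_role_def compatible_def)
qed

lemma admissible_Min_Opening_phi:
  assumes "finite S" "S \<noteq> {}" "admissible c S" "\<pi> \<in> NC_ns_on S" "compatible \<pi> c S"
  shows "c (Min S) = Opening_phi"
proof -
  have p: "partition_on S \<pi>"
    using assms(4) by (simp add: NC_ns_on_def NC_on_def)
  obtain B0 where B0: "B0 \<in> \<pi>" "Min S \<in> B0"
    using partition_on_block_exists[OF p Min_in[OF assms(1,2)]] by blast
  have "Min B0 = Min S"
    using Min_block_eq_Min[OF assms(1) p B0] .
  then have "opening_role (c (Min S))"
    using compatible_role_in_block(2)[OF assms(1,4,5) B0] by simp
  have "{B\<in>\<pi>. Min B \<le> Min S \<and> Min S < Max B} \<subseteq> {B0}"
  proof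
    fix B assume B: "B \<in> {B\<in>\<pi>. Min B \<le> Min S \<and> Min S < Max B}"
    then have "Min B = Min S"
      using partition_on_block_Min_Max(3)[OF assms(1) p] assms(1) by (simp add: antisym)
    then show "B \<in> {B0}"
      using partition_on_block_unique[OF p _ B0(1) _ B0(2)] partition_on_block_Min_Max(1)[OF assms(1) p] B
      by force
  qed
  then have "card {B\<in>\<pi>. Min B \<le> Min S \<and> Min S < Max B} \<le> 1"
    using card_mono[of "{B0}"] by fastforce
  then have "demand (c (Min S)) \<le> 1"
    using assms(3) Min_in[OF assms(1,2)] height_above_compatible[OF assms(1,4,5)]
    by (fastforce simp: admissible_def)
  then show ?thesis
    using \<open>opening_role (c (Min S))\<close> by (cases "c (Min S)") (auto simp: opening_role_def)
qed

lemma nested_pairs_insert_interval: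
  assumes "(\<sigma>, \<rho>) \<in> nested_pairs (S - I)" "I \<subseteq> S" "I \<noteq> {}" "finite I" "interval_in S I"
    and "\<rho>I \<in> NC_tilde_ns_on I"
  shows "(insert I \<sigma>, \<rho>(I := \<rho>I)) \<in> nested_pairs S"
    and "i \<in> S \<Longrightarrow> nested_coloring (insert I \<sigma>) (\<rho>(I := \<rho>I)) i =
      (if i \<in> I then WC_roles \<rho>I I i else nested_coloring \<sigma> \<rho> i)"
proof -
  have "S - I \<union> I = S"
    using assms(2) by blast
  then have NC: "insert I \<sigma> \<in> NC_on S"
    using NC_on_insert_interval_block[of \<sigma> "S - I" I] nested_pairsD(1)[OF assms(1)] assms(3-5) by auto
  moreover have "\<rho>(I := \<rho>I) \<in> PiE (insert I \<sigma>) NC_tilde_ns_on"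
    using PiE_fun_upd[where T = NC_tilde_ns_on, OF assms(6)] assms(1) by (simp add: nested_pairs_def)
  ultimately show "(insert I \<sigma>, \<rho>(I := \<rho>I)) \<in> nested_pairs S"
    by (simp add: nested_pairs_def)
  have "I \<notin> \<sigma>"
    using partition_on_block_subset[OF nested_pairsD(2)[OF assms(1)]] assms(3) by blast
  have pS: "partition_on S (insert I \<sigma>)"
    using NC by (simp add: NC_on_def)
  show "nested_coloring (insert I \<sigma>) (\<rho>(I := \<rho>I)) i =
      (if i \<in> I then WC_roles \<rho>I I i else nested_coloring \<sigma> \<rho> i)" if i: "i \<in> S"
  proof (cases "i \<in> I")
    case False
    then obtain W where W: "W \<in> \<sigma>" "i \<in> W"
      using partition_on_block_exists[OF nested_pairsD(2)[OF assms(1)]] i by blast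
    then show ?thesis
      using nested_coloring_eq[OF nested_pairsD(2)[OF assms(1)] W]
        nested_coloring_eq[OF pS insertI2[OF W(1)] W(2)]
        \<open>I \<notin> \<sigma>\<close> False by auto
  qed (use nested_coloring_eq[OF pS insertI1] in simp)
qed

lemma admissible_obtain_last_phi_block:
  assumes "finite S" "S \<noteq> {}" "admissible c S"
  obtains I \<rho>I where "I \<subseteq> S" "finite I" "I \<noteq> {}" "interval_in S I" "\<rho>I \<in> NC_tilde_ns_on I"
    "\<And>x. x \<in> I \<Longrightarrow> c x = WC_roles \<rho>I I x"
proof -
  obtain \<pi> where \<pi>: "\<pi> \<in> NC_ns_on S" "compatible \<pi> c S"
    using admissible_imp_compatible[OF assms(1,3)] by blast
  have p: "partition_on S \<pi>"
    using \<pi>(1) by (simp add: NC_ns_on_def NC_on_def)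
  let ?phis = "{x\<in>S. c x = Opening_phi}"
  have "Min S \<in> ?phis"
    using admissible_Min_Opening_phi[OF assms \<pi>] Min_in[OF assms(1,2)] by simp
  then have "Max ?phis \<in> ?phis" and last: "\<And>x. x \<in> S \<Longrightarrow> c x = Opening_phi \<Longrightarrow> x \<le> Max ?phis"
    using assms(1) Max_in[of ?phis] Max_ge[of ?phis] by auto
  then obtain B where B: "B \<in> \<pi>" "Max ?phis \<in> B" "c (Max ?phis) = Opening_phi"
    using partition_on_block_exists[OF p] by blast
  have "Min B = Max ?phis"
    using compatible_role_in_block(2)[OF assms(1) \<pi> B(1,2)] B(3) by (simp add: opening_role_def)
  define I where "I = {x\<in>S. Min B \<le> x \<and> x \<le> Max B}"
  have "Min I = Min B" "Max I = Max B"
    using assms(1) partition_on_block_Min_Max[OF assms(1) p B(1)]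
    by (auto simp: I_def intro!: Min_eqI Max_eqI)
  then have "I \<subseteq> S" "finite I" "I \<noteq> {}" "interval_in S I"
    using assms(1) partition_on_block_Min_Max[OF assms(1) p B(1)]
    by (auto simp: I_def interval_in_def)
  moreover have "{C\<in>\<pi>. C \<subseteq> I} \<in> NC_tilde_ns_on I"
    using NC_ns_on_hull_blocks[OF assms(1) \<pi>(1) B(1)] by (simp add: I_def)
  moreover have "\<And>x. x \<in> I \<Longrightarrow> c x = WC_roles {C\<in>\<pi>. C \<subseteq> I} I x"
    using WC_roles_hull_blocks[OF assms(1) \<pi> B(1)] B(3) last \<open>Min B = Max ?phis\<close>
    by (simp add: I_def)
  ultimately show thesis
    by (rule that)
qed

context fock_operators
begin

definition block_cumulant :: "(nat \<Rightarrow> 'b) \<Rightarrow> nat set \<Rightarrow> complex" where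
  "block_cumulant u V = (\<Sum>\<rho>\<in>NC_tilde_ns_on V. coloring_value u V (WC_roles \<rho> V))"

lemma coloring_value_cong:
  "finite S \<Longrightarrow> (\<And>i. i \<in> S \<Longrightarrow> c i = c' i) \<Longrightarrow> coloring_value u S c = coloring_value u S c'"
  unfolding coloring_value_def run_value_def by (subst run_cong[of _ c c']) auto

lemma run_WC_roles_to_vacuum:
  assumes "finite V" "\<rho> \<in> NC_tilde_ns_on V" "\<And>i. i \<in> V \<Longrightarrow> c i = WC_roles \<rho> V i"
  obtains \<alpha> where "run u c (sorted_list_of_set V) [] = Some (\<alpha>, [])"
    and "coloring_value u V c = \<alpha>"
proof -
  obtain \<alpha> where "run u (WC_roles \<rho> V) (sorted_list_of_set V) [] = Some (\<alpha>, [])"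
    using run_to_vacuum_iff_admissible[OF assms(1)] admissible_WC_roles[OF assms(1,2)] by blast
  moreover have "run u c (sorted_list_of_set V) [] = run u (WC_roles \<rho> V) (sorted_list_of_set V) []"
    using assms(1,3) by (intro run_cong) simp
  ultimately show thesis
    using that by (simp add: coloring_value_def run_value_def)
qed

lemma coloring_value_nested_coloring:
  "finite S \<Longrightarrow> (\<sigma>, \<rho>) \<in> nested_pairs S \<Longrightarrow>
    coloring_value u S (nested_coloring \<sigma> \<rho>) = (\<Prod>V\<in>\<sigma>. coloring_value u V (WC_roles (\<rho> V) V))"
proof (induction "card S" arbitrary: S \<sigma> \<rho> rule: less_induct)
  case less
  note p = nested_pairsD(2)[OF less.prems(2)]
  show ?case
  proof (cases "S = {}")
    case True
    then show ?thesis
      using p by (simp add: partition_on_empty coloring_value_def run_value_def)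
  next
    case False
    obtain V where V: "V \<in> \<sigma>" "interval_in S V"
      using NC_on_obtain_interval_block[OF less.prems(1) False nested_pairsD(1)[OF less.prems(2)]] .
    have "V \<subseteq> S" "V \<noteq> {}" "finite V"
      using partition_on_block_subset[OF p V(1)] partition_on_block_nonempty[OF p V(1)]
        partition_on_block_finite[OF less.prems(1) p V(1)] by simp_all
    obtain \<alpha> where run: "run u (nested_coloring \<sigma> \<rho>) (sorted_list_of_set V) [] = Some (\<alpha>, [])"
      and \<alpha>: "coloring_value u V (nested_coloring \<sigma> \<rho>) = \<alpha>"
      using run_WC_roles_to_vacuum[OF \<open>finite V\<close> nested_pairsD(3)[OF less.prems(2) V(1)]]
        nested_coloring_eq[OF p V(1)] by metis
    have "card (S - V) < card S"
      using \<open>V \<subseteq> S\<close> \<open>V \<noteq> {}\<close> less.prems(1) by (intro psubset_card_mono) auto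
    then have "coloring_value u (S - V) (nested_coloring (\<sigma> - {V}) (restrict \<rho> (\<sigma> - {V}))) =
        (\<Prod>W\<in>\<sigma> - {V}. coloring_value u W (WC_roles (\<rho> W) W))"
      using less.hyps[OF _ _ nested_pairs_remove_block[OF less.prems(2) V(1)]] less.prems(1) by simp
    moreover have "coloring_value u (S - V) (nested_coloring (\<sigma> - {V}) (restrict \<rho> (\<sigma> - {V}))) =
        coloring_value u (S - V) (nested_coloring \<sigma> \<rho>)"
      using less.prems(1) nested_coloring_remove_block[OF less.prems(2) V(1)]
      by (intro coloring_value_cong) auto
    moreover have "coloring_value u V (WC_roles (\<rho> V) V) = \<alpha>"
      using \<alpha> \<open>finite V\<close> nested_coloring_eq[OF p V(1)] coloring_value_cong by metis
    ultimately show ?thesis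
      using coloring_value_remove_interval[OF less.prems(1) \<open>V \<subseteq> S\<close> \<open>V \<noteq> {}\<close> V(2) run]
        prod.remove[OF finite_elements[OF less.prems(1) p] V(1),
          of "\<lambda>W. coloring_value u W (WC_roles (\<rho> W) W)"] by simp
  qed
qed

lemma nonzero_coloring_value_nested:
  "finite S \<Longrightarrow> coloring_value u S c \<noteq> 0 \<Longrightarrow>
    \<exists>(\<sigma>, \<rho>)\<in>nested_pairs S. \<forall>i\<in>S. nested_coloring \<sigma> \<rho> i = c i"
proof (induction "card S" arbitrary: S rule: less_induct)
  case less
  show ?case
  proof (cases "S = {}")
    case True
    then show ?thesis
      by (simp add: nested_pairs_empty)
  next
    case False
    obtain I \<rho>I where I: "I \<subseteq> S" "finite I" "I \<noteq> {}" "interval_in S I" "\<rho>I \<in> NC_tilde_ns_on I"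
      and roles: "\<And>x. x \<in> I \<Longrightarrow> c x = WC_roles \<rho>I I x"
      using admissible_obtain_last_phi_block[OF less.prems(1) False
          admissible_if_coloring_value_nonzero[OF less.prems]] by blast
    obtain \<alpha> where "run u c (sorted_list_of_set I) [] = Some (\<alpha>, [])"
      using run_WC_roles_to_vacuum[OF I(2,5) roles] by blast
    then have "coloring_value u S c = \<alpha> * coloring_value u (S - I) c"
      using coloring_value_remove_interval[OF less.prems(1) I(1,3,4)] by blast
    moreover have "card (S - I) < card S"
      using I(1,3) less.prems(1) by (intro psubset_card_mono) auto
    ultimately obtain \<sigma> \<rho> where \<sigma>\<rho>: "(\<sigma>, \<rho>) \<in> nested_pairs (S - I)"
      and "\<forall>i\<in>S - I. nested_coloring \<sigma> \<rho> i = c i"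
      using less.hyps less.prems by fastforce
    then show ?thesis
      using nested_pairs_insert_interval[OF \<sigma>\<rho> I(1,3,2,4,5)] roles
      by (intro bexI[of _ "(insert I \<sigma>, \<rho>(I := \<rho>I))"]) auto
  qed
qed

lemma moment_eq_sum_nested_pairs:
  assumes "finite S"
  shows "moment u S = (\<Sum>(\<sigma>, \<rho>)\<in>nested_pairs S. coloring_value u S (nested_coloring \<sigma> \<rho>))"
proof -
  define F where "F = (\<lambda>(\<sigma>, \<rho>). restrict (nested_coloring \<sigma> \<rho>) S)"
  have inj: "inj_on F (nested_pairs S)"
    using nested_coloring_inj[OF assms] by (auto simp: F_def inj_on_def fun_eq_iff) metis+
  have sub: "F ` nested_pairs S \<subseteq> PiE S (\<lambda>_. UNIV)"
    by (auto simp: F_def)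
  have zero: "coloring_value u S c = 0" if "c \<in> PiE S (\<lambda>_. UNIV) - F ` nested_pairs S" for c
  proof (rule ccontr)
    assume "coloring_value u S c \<noteq> 0"
    then obtain \<sigma> \<rho> where \<sigma>\<rho>: "(\<sigma>, \<rho>) \<in> nested_pairs S" "\<forall>i\<in>S. nested_coloring \<sigma> \<rho> i = c i"
      using nonzero_coloring_value_nested[OF assms] by blast
    then have "F (\<sigma>, \<rho>) = restrict c S"
      unfolding F_def by (auto intro: restrict_ext)
    also have "\<dots> = c"
      using that by (simp add: PiE_def extensional_restrict)
    finally show False
      using that \<sigma>\<rho>(1) by blast
  qed
  have "(\<Sum>c\<in>PiE S (\<lambda>_. UNIV). coloring_value u S c) = (\<Sum>c\<in>F ` nested_pairs S. coloring_value u S c)"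
    using assms sub zero by (intro sum.mono_neutral_right) (auto simp: finite_PiE)
  also have "\<dots> = (\<Sum>x\<in>nested_pairs S. coloring_value u S (F x))"
    by (simp add: sum.reindex[OF inj])
  also have "\<dots> = (\<Sum>(\<sigma>, \<rho>)\<in>nested_pairs S. coloring_value u S (nested_coloring \<sigma> \<rho>))"
    using assms by (intro sum.cong refl) (auto simp: F_def intro: coloring_value_cong)
  finally show ?thesis
    using moment_eq_sum_coloring_value[OF assms] by simp
qed

lemma moment_eq_sum_NC_on:
  assumes "finite S"
  shows "moment u S = (\<Sum>\<sigma>\<in>NC_on S. \<Prod>V\<in>\<sigma>. block_cumulant u V)"
proof -
  have fin: "finite \<sigma>" "\<forall>V\<in>\<sigma>. finite (NC_tilde_ns_on V)" if "\<sigma> \<in> NC_on S" for \<sigma>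
    using that finite_elements[OF assms] finite_NC_tilde_ns_on partition_on_block_finite[OF assms]
    by (auto simp: NC_on_def)
  have "moment u S = (\<Sum>(\<sigma>, \<rho>)\<in>nested_pairs S. \<Prod>V\<in>\<sigma>. coloring_value u V (WC_roles (\<rho> V) V))"
    using moment_eq_sum_nested_pairs[OF assms] coloring_value_nested_coloring[OF assms]
    by (auto intro: sum.cong)
  also have "\<dots> = (\<Sum>\<sigma>\<in>NC_on S. \<Sum>\<rho>\<in>PiE \<sigma> NC_tilde_ns_on. \<Prod>V\<in>\<sigma>. coloring_value u V (WC_roles (\<rho> V) V))"
    unfolding nested_pairs_def using fin finite_NC_on[OF assms]
    by (subst sum.Sigma) (auto intro: finite_PiE)
  also have "\<dots> = (\<Sum>\<sigma>\<in>NC_on S. \<Prod>V\<in>\<sigma>. block_cumulant u V)"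
    using fin by (intro sum.cong refl) (simp add: block_cumulant_def prod_sum_PiE)
  finally show ?thesis .
qed

end

section \<open>The cumulants\<close>

lemma strict_mono_on_nth_sorted_list_of_set:
  "strict_mono_on {0..<card V} ((!) (sorted_list_of_set V))"
  by (rule strict_mono_onI) (simp add: sorted_wrt_nth_less[OF strict_sorted_list_of_set])

lemma bij_betw_nth_sorted_list_of_set:
  "finite V \<Longrightarrow> bij_betw ((!) (sorted_list_of_set V)) {0..<card V} V"
  by (rule bij_betw_nth) auto

lemma sum_NC_eq_sum_NC_on:
  assumes "finite V"
  shows "(\<Sum>\<pi>\<in>NC (card V). \<Prod>W\<in>\<pi>. F ((!) (sorted_list_of_set V) ` W)) = (\<Sum>\<sigma>\<in>NC_on V. \<Prod>W\<in>\<sigma>. F W)"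
proof -
  let ?f = "(!) (sorted_list_of_set V)"
  have bij: "bij_betw ((`) ((`) ?f)) (NC (card V)) (NC_on V)"
    using bij_betw_NC_on_image[OF strict_mono_on_nth_sorted_list_of_set
        bij_betw_nth_sorted_list_of_set[OF assms]]
    by (simp add: NC_def NC_on_def)
  have "inj_on ((`) ?f) \<pi>" if "\<pi> \<in> NC (card V)" for \<pi>
    using inj_on_image_eq_iff[OF bij_betw_imp_inj_on[OF bij_betw_nth_sorted_list_of_set[OF assms]]]
      partition_on_block_subset[of "{0..<card V}" \<pi>] that
    by (auto simp: NC_def intro!: inj_onI)
  then show ?thesis
    using sum.reindex_bij_betw[OF bij, of "\<lambda>\<sigma>. \<Prod>W\<in>\<sigma>. F W"] by (simp add: prod.reindex)
qed

lemma sum_NC_minus_full_eq_sum_NC_on: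
  fixes F :: "nat set \<Rightarrow> 'a::comm_ring_1"
  assumes "finite V" "V \<noteq> {}"
  shows "(\<Sum>\<pi>\<in>NC (card V) - {{{0..<card V}}}. \<Prod>W\<in>\<pi>. F ((!) (sorted_list_of_set V) ` W)) =
    (\<Sum>\<sigma>\<in>NC_on V. \<Prod>W\<in>\<sigma>. F W) - F V"
proof -
  let ?g = "\<lambda>\<pi>. \<Prod>W\<in>\<pi>. F ((!) (sorted_list_of_set V) ` W)"
  have "{{0..<card V}} \<in> NC (card V)"
    using assms by (simp add: NC_def partition_on_space noncrossing_def)
  moreover have "finite (NC (card V))"
    using finite_NC_on[of "{0..<card V}"] by (simp add: NC_def NC_on_def)
  ultimately have "(\<Sum>\<pi>\<in>NC (card V) - {{{0..<card V}}}. ?g \<pi>) = (\<Sum>\<pi>\<in>NC (card V). ?g \<pi>) - ?g {{0..<card V}}"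
    by (simp add: sum_diff1)
  moreover have "(!) (sorted_list_of_set V) ` {0..<card V} = V"
    using bij_betw_imp_surj_on[OF bij_betw_nth_sorted_list_of_set[OF assms(1)]] .
  ultimately show ?thesis
    using sum_NC_eq_sum_NC_on[OF assms(1), of F] by simp
qed

lemma card_image_nth_sorted_list_of_set_less:
  assumes "finite V" "W \<subset> {0..<card V}"
  shows "card ((!) (sorted_list_of_set V) ` W) < card V"
proof -
  have "card ((!) (sorted_list_of_set V) ` W) = card W"
    using assms(2) by (intro card_image inj_on_subset[OF bij_betw_imp_inj_on[OF
          bij_betw_nth_sorted_list_of_set[OF assms(1)]]]) auto
  also have "\<dots> < card V"
    using psubset_card_mono[OF _ assms(2)] by simp
  finally show ?thesis .
qed

lemma nths_sorted_list_of_set: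
  assumes "finite V" "W \<subseteq> {0..<card V}"
  shows "nths (sorted_list_of_set V) W = sorted_list_of_set ((!) (sorted_list_of_set V) ` W)"
proof (rule sorted_distinct_set_unique)
  have "set (nths (sorted_list_of_set V) W) = (!) (sorted_list_of_set V) ` W"
    using assms by (force simp: set_nths)
  moreover have "finite W"
    using assms(2) finite_subset by blast
  ultimately show "set (nths (sorted_list_of_set V) W) =
      set (sorted_list_of_set ((!) (sorted_list_of_set V) ` W))"
    by simp
qed (simp_all add: sorted_nths)

context fock_operators
begin

lemma block_cumulant_empty: "block_cumulant u {} = 0"
  by (simp add: block_cumulant_def NC_tilde_ns_on_empty)

lemma cumulant_Xop_eq_block_cumulant:
  "finite V \<Longrightarrow>
    cumulant (vstate sc st \<phi> \<gamma>) (map (\<lambda>i. Xop sc \<phi> \<gamma> \<Lambda> (u i)) (sorted_list_of_set V)) = block_cumulant u V"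
proof (induction "card V" arbitrary: V rule: less_induct)
  case less
  define k where "k = card V"
  define f where "f = (!) (sorted_list_of_set V)"
  let ?\<psi> = "vstate sc st \<phi> \<gamma>" and ?X = "\<lambda>V. map (\<lambda>i. Xop sc \<phi> \<gamma> \<Lambda> (u i)) (sorted_list_of_set V)"
  have inner: "(if W \<subset> {0..<k} then cumulant ?\<psi> (nths (?X V) W) else 0) = block_cumulant u (f ` W)"
    if "\<pi> \<in> NC k - {{{0..<k}}}" "W \<in> \<pi>" for \<pi> W
  proof -
    have W: "W \<subset> {0..<k}"
      using NC_block_psubset that by blast
    then have "nths (?X V) W = ?X (f ` W)"
      using nths_sorted_list_of_set[OF less.prems, of W] by (simp add: nths_map f_def k_def)
    moreover have "card (f ` W) < card V"
      using card_image_nth_sorted_list_of_set_less[OF less.prems W[unfolded k_def]] by (simp add: f_def)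
    moreover have "finite (f ` W)"
      using W finite_subset by blast
    ultimately show ?thesis
      using less.hyps W by simp
  qed
  have "cumulant ?\<psi> (?X V) = moment u V -
      (\<Sum>\<pi>\<in>NC k - {{{0..<k}}}. \<Prod>W\<in>\<pi>. (if W \<subset> {0..<k} then cumulant ?\<psi> (nths (?X V) W) else 0))"
    by (subst cumulant.simps) (simp add: vstate_eq_lin_ext moment_def k_def del: cumulant.simps)
  also have "\<dots> = moment u V - (\<Sum>\<pi>\<in>NC k - {{{0..<k}}}. \<Prod>W\<in>\<pi>. block_cumulant u (f ` W))"
    using inner by (intro arg_cong2[where f = minus] sum.cong prod.cong) auto
  finally have cumulant: "cumulant ?\<psi> (?X V) =
      moment u V - (\<Sum>\<pi>\<in>NC k - {{{0..<k}}}. \<Prod>W\<in>\<pi>. block_cumulant u (f ` W))" .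
  show ?case
  proof (cases "k = 0")
    case True
    then have "V = {}" "NC k - {{{0..<k}}} = {{}}"
      using less.prems by (auto simp: k_def NC_def partition_on_empty noncrossing_def)
    then show ?thesis
      using cumulant by (simp add: moment_def vac_def vacuum_coeff_def block_cumulant_empty)
  next
    case False
    then have "V \<noteq> {}"
      by (auto simp: k_def)
    then have "(\<Sum>\<pi>\<in>NC k - {{{0..<k}}}. \<Prod>W\<in>\<pi>. block_cumulant u (f ` W)) =
        moment u V - block_cumulant u V"
      using sum_NC_minus_full_eq_sum_NC_on[OF less.prems, of "block_cumulant u"]
        moment_eq_sum_NC_on[OF less.prems] by (simp add: f_def k_def)
    then show ?thesis
      using cumulant by simp
  qed
qed

lemma WC_eq_role_ops: "WC sc \<phi> \<gamma> \<Lambda> n \<pi> u = role_ops u (WC_roles \<pi> {0..<n}) [0..<n]"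
proof -
  have "(if is_closing \<pi> i then a_plus (u i) else if i = 0 then a_tilde_phi sc \<phi> (u i)
      else if is_opening \<pi> i then a_tilde_gamma \<gamma> (u i) else a_zero \<Lambda> (u i)) =
      role_op (WC_roles \<pi> {0..<n} i) (u i)" if "i \<in> set [0..<n]" for i
  proof -
    have "Min {0..<n} = 0"
      using that by (intro Min_eqI) auto
    then show ?thesis
      by (simp add: WC_roles_def role_op_Closing role_op_Middle role_op_Opening_gamma
          role_op_Opening_phi)
  qed
  then show ?thesis
    unfolding WC_def role_ops_def by (intro arg_cong[where f = opprod] map_cong) auto
qed

lemma sum_WC_eq_block_cumulant:
  assumes "1 \<le> n"
  shows "(\<Sum>\<pi>\<in>NC_tilde_ns n. vstate sc st \<phi> \<gamma> (WC sc \<phi> \<gamma> \<Lambda> n \<pi> u)) = block_cumulant u {0..<n}"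
proof -
  have "Min {0..<n} = 0" "Max {0..<n} = n - 1"
    using assms by (auto intro: Min_eqI Max_eqI)
  then have "NC_tilde_ns n = NC_tilde_ns_on {0..<n}"
    by (simp add: NC_tilde_ns_def NC_tilde_ns_on_def NC_ns_on_def NC_on_def NC_def)
  moreover have "vstate sc st \<phi> \<gamma> (WC sc \<phi> \<gamma> \<Lambda> n \<pi> u) = coloring_value u {0..<n} (WC_roles \<pi> {0..<n})"
    for \<pi>
    by (simp add: WC_eq_role_ops vstate_eq_lin_ext vac_def coloring_value_def run_value_eq_lin_ext)
  ultimately show ?thesis
    by (simp add: block_cumulant_def)
qed

end

theorem proposition3p7:
  fixes sc :: "complex \<Rightarrow> 'b::ring_1 \<Rightarrow> 'b"
    and st :: "'b \<Rightarrow> 'b"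
    and \<phi> :: "'b \<Rightarrow> complex"
    and \<gamma> :: "'b \<Rightarrow> 'b"
    and \<Lambda> :: "'b \<Rightarrow> 'b \<Rightarrow> 'b"
    and n :: nat
    and u :: "nat \<Rightarrow> 'b"
  assumes alg: "unital_star_algebra sc st"
    and phi_lin: "Vector_Spaces.linear sc (*) \<phi>"
    and phi_star: "\<forall>b. \<phi> (st b) = cnj (\<phi> b)"
    and phi_pos: "\<forall>b. \<phi> (st b * b) \<in> \<real> \<and> 0 \<le> Re (\<phi> (st b * b))"
    and phi_faithful: "\<forall>b. \<phi> (st b * b) = 0 \<longrightarrow> b = 0"
    and gamma_lin: "Vector_Spaces.linear sc sc \<gamma>"
    and gamma_star: "\<forall>b. \<gamma> (st b) = st (\<gamma> b)"
    and Lambda_lin1: "\<forall>v. Vector_Spaces.linear sc sc (\<lambda>b. \<Lambda> b v)"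
    and Lambda_lin2: "\<forall>b. Vector_Spaces.linear sc sc (\<Lambda> b)"
    and Lambda_star: "\<forall>b v. \<Lambda> (st b) (st v) = st (\<Lambda> b v)"
    and cp: "completely_positive st (gpp sc \<phi> \<gamma>)"
    and phi_sym: "\<forall>b v w. \<phi> (st v * \<Lambda> b w) = \<phi> (st (\<Lambda> (st b) v) * w)"
    and gamma_sym: "\<forall>b v w. \<gamma> (st v * \<Lambda> b w) = \<gamma> (st (\<Lambda> (st b) v) * w)"
  shows "(2 \<le> n \<longrightarrow>
           cumulant (vstate sc st \<phi> \<gamma>) (map (\<lambda>i. Xop sc \<phi> \<gamma> \<Lambda> (u i)) [0..<n]) =
           (\<Sum>\<pi>\<in>NC_tilde_ns n. vstate sc st \<phi> \<gamma> (WC sc \<phi> \<gamma> \<Lambda> n \<pi> u)))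
       \<and> cumulant (vstate sc st \<phi> \<gamma>) [Xop sc \<phi> \<gamma> \<Lambda> (u 0)] = 0"
proof -
  interpret fock_operators sc \<phi> \<gamma> \<Lambda>
    using alg phi_lin gamma_lin Lambda_lin2
    unfolding unital_star_algebra_def by (intro fock_operators.intro fock_operators_axioms.intro) blast+
  have cumulant: "cumulant (vstate sc st \<phi> \<gamma>) (map (\<lambda>i. Xop sc \<phi> \<gamma> \<Lambda> (u i)) [0..<m]) =
      block_cumulant u {0..<m}" for m
    using cumulant_Xop_eq_block_cumulant[of "{0..<m}" st u] by simp
  show ?thesis
  proof
    show "2 \<le> n \<longrightarrow> cumulant (vstate sc st \<phi> \<gamma>) (map (\<lambda>i. Xop sc \<phi> \<gamma> \<Lambda> (u i)) [0..<n]) =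
        (\<Sum>\<pi>\<in>NC_tilde_ns n. vstate sc st \<phi> \<gamma> (WC sc \<phi> \<gamma> \<Lambda> n \<pi> u))"
      using cumulant[of n] sum_WC_eq_block_cumulant[of n st u] by simp
    have "{0..<1} = {0 :: nat}"
      by auto
    then show "cumulant (vstate sc st \<phi> \<gamma>) [Xop sc \<phi> \<gamma> \<Lambda> (u 0)] = 0"
      using cumulant[of 1]
      by (simp add: block_cumulant_def NC_tilde_ns_on_singleton del: cumulant.simps)
  qed
qed

end
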